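(* Under the model described in the context, with $I_n$ defined as there, $\lim_{n\to\infty}E[I_n]=E[I_\lambda]$ and $\lim_{n\to\infty}\operatorname{Var}(I_n)=\operatorname{Var}(I_\lambda)$.
   Context: Let $\lambda>0$, $\alpha>2$. Transmitter locations form a Poisson point process $\Phi_\Lambda=\sum_{k\ge1}\delta_{\mathbf X_k}$ on $\mathbb R^2$ with locally finite mean measure $\Lambda$ and $\Lambda(\mathbb R^2)=\infty$. A test receiver is at a fixed point $\mathbf X_o$, $T(\mathbf x)=\|\mathbf x-\mathbf X_o\|_2$, and $\Lambda(\{\mathbf x: T(\mathbf x)\in A\})=\lambda\int_A p(t)\,dt$ for all Borel $A\subseteq[0,\infty)$, where $p\ge0$, $p(t)=O(t^{\alpha-1-\epsilon})$ as $t\to\infty$ for some $\epsilon>0$. The path-loss $G:[0,\infty)\to[0,\infty)$ is bounded, monotone non-increasing, $G(t)=O(t^{-\alpha})$ as $t\to\infty$. The fading coefficients $H_k\ge0$ are i.i.d. with density $q$, independent of $\Phi_\Lambda$, with finite first three moments. $P>0$. $I_\lambda=\sum_{k\ge1}PH_kG(T(\mathbf X_k))$. For each $n$, $\Lambda_n=\lambda\int_0^n p(t)\,dt$, $U_{1,n},\dots,U_{\lceil\Lambda_n\rceil,n}$ are i.i.d. with density $f(t)=\frac{\lambda p(t)}{\Lambda_n}\mathbf 1\{0\le t\le n\}$, independent of $(H_k)$, and $I_n=\sum_{k=1}^{\lceil\Lambda_n\rceil}PH_kG(U_{k,n})$. *)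

theory Defs
  imports "HOL-Probability.Probability" "HOL-Library.Landau_Symbols"
begin

definition pp_count :: "(nat \<Rightarrow> 'w \<Rightarrow> 'b) \<Rightarrow> 'b set \<Rightarrow> 'w \<Rightarrow> nat" where
  "pp_count X A \<omega> = card {k. X k \<omega> \<in> A}"

definition poisson_point_process ::
    "'w measure \<Rightarrow> ('b::topological_space) measure \<Rightarrow> (nat \<Rightarrow> 'w \<Rightarrow> 'b) \<Rightarrow> bool" where
  "poisson_point_process M \<Lambda> X \<longleftrightarrow>
     sets \<Lambda> = sets borel \<and>
     (\<forall>k. X k \<in> measurable M borel) \<and>
     (\<forall>A \<in> sets borel. emeasure \<Lambda> A < \<infinity> \<longrightarrow>
        (AE \<omega> in M. finite {k. X k \<omega> \<in> A}) \<and>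
        (\<forall>m::nat. measure M {\<omega> \<in> space M. pp_count X A \<omega> = m}
                   = measure \<Lambda> A ^ m / fact m * exp (- measure \<Lambda> A))) \<and>
     (\<forall>(A :: nat \<Rightarrow> 'b set) I. finite I \<longrightarrow>
        (\<forall>i\<in>I. A i \<in> sets borel \<and> emeasure \<Lambda> (A i) < \<infinity>) \<longrightarrow>
        disjoint_family_on A I \<longrightarrow>
        prob_space.indep_vars M (\<lambda>_. count_space UNIV) (\<lambda>i. pp_count X (A i)) I)"

text \<open>Independence of two random variables with possibly different codomains:
  the generated \<open>\<sigma>\<close>-algebras are independent (library \<open>indep_var\<close> requires equal codomain types).\<close>
definition indep_rvs ::
    "'w measure \<Rightarrow> 'a measure \<Rightarrow> ('w \<Rightarrow> 'a) \<Rightarrow> 'b measure \<Rightarrow> ('w \<Rightarrow> 'b) \<Rightarrow> bool" where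
  "indep_rvs M Ma A Mb B \<longleftrightarrow>
     A \<in> measurable M Ma \<and> B \<in> measurable M Mb \<and>
     prob_space.indep_sets M
       (case_bool (sets (vimage_algebra (space M) A Ma)) (sets (vimage_algebra (space M) B Mb))) UNIV"

end

theory Submission
  imports Defs
begin

text \<open>
  Campbell's formulas give the mean \<open>P E[H] \<integral> g d\<Lambda>\<close> of the shot noise \<open>\<Sum>\<^sub>k P H\<^sub>k g(X\<^sub>k)\<close>
  of a Poisson process with i.i.d. marks independent of the points and, because the second
  factorial moment measure of a Poisson process is \<open>\<Lambda> \<otimes> \<Lambda>\<close>, its variance
  \<open>P\<^sup>2 E[H\<^sup>2] \<integral> g\<^sup>2 d\<Lambda>\<close>. For the radial intensity these integrals are \<open>\<lambda> \<integral>\<^sub>0\<^sup>\<infinity> G p\<close> and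
  \<open>\<lambda> \<integral>\<^sub>0\<^sup>\<infinity> G\<^sup>2 p\<close>, finite because \<open>G(t) p(t) = O(t powr (-1 - \<epsilon>))\<close>.
  The truncated model is a sum of \<open>N\<^sub>n = \<lceil>\<Lambda>\<^sub>n\<rceil>\<close> i.i.d. terms whose distances have density
  \<open>\<lambda> p / \<Lambda>\<^sub>n\<close> on \<open>[0, n]\<close>, so its mean and variance are \<open>N\<^sub>n \<lambda> / \<Lambda>\<^sub>n\<close> times the same integrals
  taken over \<open>[0, n]\<close>, up to a term of order \<open>1 / \<Lambda>\<^sub>n\<close> in the variance. As \<open>\<Lambda>\<^sub>n \<rightarrow> \<infinity>\<close>,
  \<open>N\<^sub>n / \<Lambda>\<^sub>n \<rightarrow> 1\<close> and the truncated integrals increase to the full ones.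
\<close>

lemma SUP_mult_SUP_incseq_ennreal:
  fixes a b :: "nat \<Rightarrow> ennreal"
  assumes a: "incseq a" and b: "incseq b"
  shows "(SUP i. a i) * (SUP i. b i) = (SUP i. a i * b i)"
proof (rule antisym)
  show "(SUP i. a i) * (SUP i. b i) \<le> (SUP i. a i * b i)"
    unfolding SUP_mult_right_ennreal SUP_mult_left_ennreal
  proof (intro SUP_least)
    fix i j
    have "a i * b j \<le> a (max i j) * b (max i j)"
      using a b by (intro mult_mono) (auto simp: incseq_def)
    also have "\<dots> \<le> (SUP i. a i * b i)" by (rule SUP_upper) auto
    finally show "a i * b j \<le> (SUP i. a i * b i)" .
  qed
qed (rule SUP_least, rule mult_mono, auto intro: SUP_upper)

lemma SUP_mult_indicator_exhaustion:
  fixes f :: "'b \<Rightarrow> ennreal"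
  assumes "incseq K" and "(\<Union>r. K r) = UNIV"
  shows "(SUP r. f x * indicator (K r) x) = f x"
proof -
  obtain r0 where r0: "x \<in> K r0" using assms(2) by blast
  show ?thesis
  proof (rule antisym)
    show "(SUP r. f x * indicator (K r) x) \<le> f x"
      by (rule SUP_least) (auto simp: indicator_def)
    have "f x = f x * indicator (K r0) x" using r0 by simp
    also have "\<dots> \<le> (SUP r. f x * indicator (K r) x)" by (rule SUP_upper) auto
    finally show "f x \<le> (SUP r. f x * indicator (K r) x)" .
  qed
qed

lemma suminf_mult_suminf_ennreal:
  fixes a b :: "nat \<Rightarrow> ennreal"
  shows "(\<Sum>k. a k) * (\<Sum>j. b j) = (\<Sum>k. \<Sum>j. a k * b j)"
proof -
  have "(\<Sum>k. \<Sum>j. a k * b j) = (\<Sum>k. a k * (\<Sum>j. b j))" by (simp only: ennreal_suminf_cmult)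
  also have "\<dots> = (\<Sum>k. (\<Sum>j. b j) * a k)" by (simp only: mult.commute)
  also have "\<dots> = (\<Sum>j. b j) * (\<Sum>k. a k)" by (rule ennreal_suminf_cmult)
  finally show ?thesis by (simp only: mult.commute)
qed

lemma suminf_split_off_ennreal:
  fixes f :: "nat \<Rightarrow> ennreal"
  shows "(\<Sum>j. f j) = f k + (\<Sum>j. if j = k then 0 else f j)"
proof -
  have "(\<Sum>j. f j) = (\<Sum>j. (if j = k then f k else 0) + (if j = k then 0 else f j))"
    by (intro suminf_cong) auto
  also have "\<dots> = (\<Sum>j. if j = k then f k else 0) + (\<Sum>j. if j = k then 0 else f j)"
    by (rule suminf_add[symmetric]) auto
  also have "(\<Sum>j. if j = k then f k else 0) = f k"
    by (subst suminf_finite[of "{k}"]) auto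
  finally show ?thesis .
qed

lemma suminf_suminf_diagonal_weights_ennreal:
  fixes a :: "nat \<Rightarrow> nat \<Rightarrow> ennreal"
  shows "(\<Sum>k. \<Sum>j. a k j * (if k = j then x else y))
       = x * (\<Sum>k. a k k) + y * (\<Sum>k. \<Sum>j. if j = k then 0 else a k j)"
proof -
  have "(\<Sum>j. a k j * (if k = j then x else y)) = x * a k k + y * (\<Sum>j. if j = k then 0 else a k j)"
    for k
  proof -
    have "(\<Sum>j. if j = k then 0 else a k j * (if k = j then x else y))
        = (\<Sum>j. y * (if j = k then 0 else a k j))"
      by (intro suminf_cong) (auto simp: mult.commute)
    then show ?thesis
      by (subst suminf_split_off_ennreal[where k = k]) (simp add: mult.commute)
  qed
  then have "(\<Sum>k. \<Sum>j. a k j * (if k = j then x else y))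
      = (\<Sum>k. x * a k k + y * (\<Sum>j. if j = k then 0 else a k j))"
    by (intro suminf_cong)
  also have "\<dots> = x * (\<Sum>k. a k k) + y * (\<Sum>k. \<Sum>j. if j = k then 0 else a k j)"
    by (subst suminf_add[symmetric]) auto
  finally show ?thesis .
qed

lemma sum_if_eq_ennreal:
  fixes A B :: ennreal
  assumes "finite S" "k \<in> S"
  shows "(\<Sum>j\<in>S. if k = j then A else B) = A + of_nat (card S - 1) * B"
proof -
  have "(\<Sum>j\<in>S. if k = j then A else B)
      = (if k = k then A else B) + (\<Sum>j\<in>S - {k}. if k = j then A else B)"
    using assms by (rule sum.remove)
  also have "(\<Sum>j\<in>S - {k}. if k = j then A else B) = (\<Sum>j\<in>S - {k}. B)" by (intro sum.cong) auto
  finally show ?thesis using assms by simp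
qed

lemma of_nat_mult_ennreal: "0 \<le> y \<Longrightarrow> of_nat m * ennreal y = ennreal (real m * y)"
  by (simp add: ennreal_mult ennreal_of_nat_eq_real_of_nat)

lemma ennreal_mult_mult_nonneg:
  assumes "P \<ge> 0" "g \<ge> 0"
  shows "ennreal (P * h * g) = ennreal P * (ennreal h * ennreal g)"
proof (cases "h \<ge> 0")
  case False
  then have "P * h * g \<le> 0"
    using assms by (intro mult_nonpos_nonneg mult_nonneg_nonpos) auto
  then show ?thesis using False by (simp add: ennreal_neg)
qed (use assms in \<open>simp add: ennreal_mult mult.assoc\<close>)

lemma nn_integral_ennreal_square_AE:
  assumes "AE \<omega> in M. f \<omega> \<ge> 0"
  shows "(\<integral>\<^sup>+\<omega>. ennreal (f \<omega>) * ennreal (f \<omega>) \<partial>M) = (\<integral>\<^sup>+\<omega>. ennreal ((f \<omega>)\<^sup>2) \<partial>M)"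
  using assms by (intro nn_integral_cong_AE) (auto simp: ennreal_mult power2_eq_square)

lemma borel_measurable_induct_functional_eq:
  fixes LA LB :: "('a::topological_space \<Rightarrow> ennreal) \<Rightarrow> ennreal"
  assumes f: "f \<in> borel_measurable borel"
    and indicator: "\<And>A. A \<in> sets borel \<Longrightarrow> LA (indicator A) = LB (indicator A)"
    and cmultA: "\<And>u c. u \<in> borel_measurable borel \<Longrightarrow> LA (\<lambda>x. c * u x) = c * LA u"
    and cmultB: "\<And>u c. u \<in> borel_measurable borel \<Longrightarrow> LB (\<lambda>x. c * u x) = c * LB u"
    and addA: "\<And>u v. u \<in> borel_measurable borel \<Longrightarrow> v \<in> borel_measurable borel
        \<Longrightarrow> LA (\<lambda>x. v x + u x) = LA v + LA u"
    and addB: "\<And>u v. u \<in> borel_measurable borel \<Longrightarrow> v \<in> borel_measurable borel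
        \<Longrightarrow> LB (\<lambda>x. v x + u x) = LB v + LB u"
    and SUPA: "\<And>U. (\<And>i. U i \<in> borel_measurable borel) \<Longrightarrow> incseq U
        \<Longrightarrow> LA (SUP i. U i) = (SUP i. LA (U i))"
    and SUPB: "\<And>U. (\<And>i. U i \<in> borel_measurable borel) \<Longrightarrow> incseq U
        \<Longrightarrow> LB (SUP i. U i) = (SUP i. LB (U i))"
  shows "LA f = LB f"
  using f
proof (induction rule: borel_measurable_induct)
  case (cong f g)
  then have "f = g" by auto
  with cong show ?case by simp
next
  case (seq U)
  have "LA (SUP i. U i) = (SUP i. LA (U i))" using seq by (intro SUPA) auto
  moreover have "LB (SUP i. U i) = (SUP i. LB (U i))" using seq by (intro SUPB) auto
  moreover have "(SUP i. LA (U i)) = (SUP i. LB (U i))" using seq by simp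
  ultimately show ?case by (simp only:)
qed (simp_all add: indicator cmultA cmultB addA addB)

lemma (in prob_space) indep_var_nn_integral_mult:
  fixes F G :: "'a \<Rightarrow> ennreal"
  assumes "indep_var borel F borel G"
  shows "(\<integral>\<^sup>+\<omega>. F \<omega> * G \<omega> \<partial>M) = (\<integral>\<^sup>+\<omega>. F \<omega> \<partial>M) * (\<integral>\<^sup>+\<omega>. G \<omega> \<partial>M)"
proof -
  have borel_bool: "(\<lambda>_. borel) = case_bool borel borel"
    by (rule ext) (simp split: bool.split)
  have "indep_vars (\<lambda>_. borel) (case_bool F G) UNIV"
    using assms unfolding indep_var_def by (subst borel_bool)
  then have "(\<integral>\<^sup>+\<omega>. (\<Prod>i\<in>UNIV. case_bool F G i \<omega>) \<partial>M) = (\<Prod>i\<in>UNIV. \<integral>\<^sup>+\<omega>. case_bool F G i \<omega> \<partial>M)"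
    by (intro indep_vars_nn_integral) auto
  then show ?thesis by (simp add: UNIV_bool mult.commute)
qed

lemma (in prob_space) indep_vars_nn_integral_mult:
  fixes F G :: "'c \<Rightarrow> ennreal"
  assumes I: "indep_vars M' X I" and ij: "i \<in> I" "j \<in> I" "i \<noteq> j"
    and F: "F \<in> borel_measurable (M' i)" and G: "G \<in> borel_measurable (M' j)"
  shows "(\<integral>\<^sup>+\<omega>. F (X i \<omega>) * G (X j \<omega>) \<partial>M) = (\<integral>\<^sup>+\<omega>. F (X i \<omega>) \<partial>M) * (\<integral>\<^sup>+\<omega>. G (X j \<omega>) \<partial>M)"
proof -
  define Y where "Y k = (if k = i then F else G)" for k
  have "indep_vars M' X {i, j}" using ij by (intro indep_vars_subset[OF I]) auto
  then have "indep_vars (\<lambda>_. borel) (\<lambda>k \<omega>. Y k (X k \<omega>)) {i, j}"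
    by (rule indep_vars_compose2) (use F G ij in \<open>auto simp: Y_def\<close>)
  then have "(\<integral>\<^sup>+\<omega>. (\<Prod>k\<in>{i,j}. Y k (X k \<omega>)) \<partial>M) = (\<Prod>k\<in>{i,j}. \<integral>\<^sup>+\<omega>. Y k (X k \<omega>) \<partial>M)"
    by (intro indep_vars_nn_integral) auto
  then show ?thesis using ij by (simp add: Y_def)
qed

lemma vimage_compose_in_vimage_algebra:
  assumes C: "C \<in> measurable M Mc" and h: "h \<in> measurable Mc N" and S: "S \<in> sets N"
  shows "(\<lambda>\<omega>. h (C \<omega>)) -` S \<inter> space M \<in> sets (vimage_algebra (space M) C Mc)"
proof -
  have "(\<lambda>\<omega>. h (C \<omega>)) -` S \<inter> space M = C -` (h -` S \<inter> space Mc) \<inter> space M"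
    using C by (auto simp: measurable_def)
  moreover have "h -` S \<inter> space Mc \<in> sets Mc" using h S by (auto simp: measurable_def)
  ultimately show ?thesis by (metis in_vimage_algebra)
qed

lemma (in prob_space) indep_rvs_compose_indep_var:
  fixes f :: "'b \<Rightarrow> 'd::topological_space" and g :: "'c \<Rightarrow> 'd"
  assumes I: "indep_rvs M Ma A Mb B"
    and f: "f \<in> borel_measurable Ma" and g: "g \<in> borel_measurable Mb"
  shows "indep_var borel (\<lambda>\<omega>. f (A \<omega>)) borel (\<lambda>\<omega>. g (B \<omega>))"
proof -
  have A: "A \<in> measurable M Ma" and B: "B \<in> measurable M Mb"
    and IS: "indep_sets (case_bool (sets (vimage_algebra (space M) A Ma))
                                   (sets (vimage_algebra (space M) B Mb))) UNIV"
    using I unfolding indep_rvs_def by auto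
  show ?thesis
    unfolding indep_var_def indep_vars_def2
  proof (intro conjI ballI)
    fix i :: bool
    show "random_variable (case_bool borel borel i) (case_bool (\<lambda>\<omega>. f (A \<omega>)) (\<lambda>\<omega>. g (B \<omega>)) i)"
      using f g A B by (cases i) auto
  next
    show "indep_sets (\<lambda>i. {case_bool (\<lambda>\<omega>. f (A \<omega>)) (\<lambda>\<omega>. g (B \<omega>)) i -` S \<inter> space M |S.
                              S \<in> sets (case_bool borel borel i)}) UNIV"
      by (rule indep_sets_mono_sets[OF IS])
         (auto split: bool.split intro!: vimage_compose_in_vimage_algebra A B f g)
  qed
qed

lemma (in prob_space) mean_variance_of_nn_moments:
  fixes Y :: "'a \<Rightarrow> real"
  assumes Y[measurable]: "Y \<in> borel_measurable M" and nonneg: "AE \<omega> in M. Y \<omega> \<ge> 0"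
    and m1: "(\<integral>\<^sup>+\<omega>. ennreal (Y \<omega>) \<partial>M) = ennreal a"
    and m2: "(\<integral>\<^sup>+\<omega>. ennreal ((Y \<omega>)\<^sup>2) \<partial>M) = ennreal b"
    and "a \<ge> 0" "b \<ge> 0"
  shows "expectation Y = a" and "expectation (\<lambda>\<omega>. (Y \<omega> - expectation Y)\<^sup>2) = b - a\<^sup>2"
proof -
  have iY: "integrable M Y" by (rule integrableI_nonneg) (use nonneg m1 in auto)
  have iY2: "integrable M (\<lambda>\<omega>. (Y \<omega>)\<^sup>2)" by (rule integrableI_nonneg) (use m2 in auto)
  show EY: "expectation Y = a"
    using integral_eq_nn_integral[OF Y nonneg] m1 \<open>a \<ge> 0\<close> by simp
  have EY2: "expectation (\<lambda>\<omega>. (Y \<omega>)\<^sup>2) = b"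
    using integral_eq_nn_integral[of "\<lambda>\<omega>. (Y \<omega>)\<^sup>2"] m2 \<open>b \<ge> 0\<close> by simp
  have "expectation (\<lambda>\<omega>. (Y \<omega> - a)\<^sup>2) = expectation (\<lambda>\<omega>. (Y \<omega>)\<^sup>2 - 2 * a * Y \<omega> + a\<^sup>2)"
    by (simp add: power2_diff algebra_simps)
  also have "\<dots> = b - 2 * a * a + a\<^sup>2"
    using iY iY2 EY EY2 by (simp add: prob_space)
  finally show "expectation (\<lambda>\<omega>. (Y \<omega> - expectation Y)\<^sup>2) = b - a\<^sup>2"
    using EY by (simp add: power2_eq_square)
qed

lemma (in prob_space) mean_variance_enn2real:
  fixes Z :: "'a \<Rightarrow> ennreal"
  assumes [measurable]: "Z \<in> borel_measurable M"
    and m1: "(\<integral>\<^sup>+\<omega>. Z \<omega> \<partial>M) = ennreal a" and m2: "(\<integral>\<^sup>+\<omega>. Z \<omega> * Z \<omega> \<partial>M) = ennreal b"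
    and "a \<ge> 0" "b \<ge> 0"
  defines "Y \<equiv> \<lambda>\<omega>. enn2real (Z \<omega>)"
  shows "expectation Y = a" and "expectation (\<lambda>\<omega>. (Y \<omega> - expectation Y)\<^sup>2) = b - a\<^sup>2"
proof -
  have "AE \<omega> in M. Z \<omega> \<noteq> \<infinity>"
    by (rule nn_integral_noteq_infinite) (simp_all add: m1)
  then have Y_eq: "AE \<omega> in M. ennreal (Y \<omega>) = Z \<omega>"
    unfolding Y_def by eventually_elim (simp add: ennreal_enn2real top.not_eq_extremum)
  have "(\<integral>\<^sup>+\<omega>. ennreal (Y \<omega>) \<partial>M) = ennreal a"
    using m1 by (simp add: nn_integral_cong_AE[OF Y_eq])
  moreover have "AE \<omega> in M. ennreal ((Y \<omega>)\<^sup>2) = Z \<omega> * Z \<omega>"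
    using Y_eq by eventually_elim (simp add: Y_def power2_eq_square ennreal_mult)
  then have "(\<integral>\<^sup>+\<omega>. ennreal ((Y \<omega>)\<^sup>2) \<partial>M) = ennreal b"
    using m2 by (simp add: nn_integral_cong_AE)
  moreover have "Y \<in> borel_measurable M" "AE \<omega> in M. Y \<omega> \<ge> 0" by (simp_all add: Y_def)
  ultimately show "expectation Y = a" and "expectation (\<lambda>\<omega>. (Y \<omega> - expectation Y)\<^sup>2) = b - a\<^sup>2"
    using mean_variance_of_nn_moments assms(4,5) by blast+
qed

section \<open>Moments of the Poisson distribution\<close>

lemma Suc_mult_power_div_fact:
  fixes \<mu> :: real
  shows "real (Suc n) * (\<mu> ^ Suc n / fact (Suc n)) = \<mu> * (\<mu> ^ n / fact n)"
  by (simp add: field_simps del: of_nat_Suc)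

lemma exp_sums_real: "(\<lambda>n. \<mu> ^ n / fact n) sums exp (\<mu> :: real)"
  using exp_converges[of \<mu>] by (simp add: divide_inverse mult.commute scaleR_conv_of_real)

lemma poisson_sums_mean:
  fixes \<mu> :: real
  shows "(\<lambda>m. real m * (\<mu> ^ m / fact m * exp (-\<mu>))) sums \<mu>"
proof -
  have "(\<lambda>n. \<mu> * exp (-\<mu>) * (\<mu> ^ n / fact n)) sums \<mu>"
    using sums_mult[OF exp_sums_real, of "\<mu> * exp (-\<mu>)" \<mu>] by (simp add: mult.assoc flip: exp_add)
  moreover have eq: "real (Suc n) * (\<mu> ^ Suc n / fact (Suc n) * exp (-\<mu>))
      = \<mu> * exp (-\<mu>) * (\<mu> ^ n / fact n)"
    for n by (simp only: mult.assoc[symmetric] Suc_mult_power_div_fact) (simp add: mult_ac)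
  ultimately have "(\<lambda>n. real (Suc n) * (\<mu> ^ Suc n / fact (Suc n) * exp (-\<mu>))) sums \<mu>"
    by (simp only: eq)
  then show ?thesis by (subst (asm) sums_Suc_iff) simp
qed

lemma poisson_sums_factorial_moment2:
  fixes \<mu> :: real
  shows "(\<lambda>m. real m * (real m - 1) * (\<mu> ^ m / fact m * exp (-\<mu>))) sums \<mu>\<^sup>2"
proof -
  have "(\<lambda>n. \<mu>\<^sup>2 * exp (-\<mu>) * (\<mu> ^ n / fact n)) sums \<mu>\<^sup>2"
    using sums_mult[OF exp_sums_real, of "\<mu>\<^sup>2 * exp (-\<mu>)" \<mu>] by (simp add: mult.assoc flip: exp_add)
  moreover have eq: "real (Suc (Suc n)) * (real (Suc (Suc n)) - 1)
      * (\<mu> ^ Suc (Suc n) / fact (Suc (Suc n)) * exp (-\<mu>))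
      = \<mu>\<^sup>2 * exp (-\<mu>) * (\<mu> ^ n / fact n)" for n
  proof -
    have "real (Suc (Suc n)) * (real (Suc (Suc n)) - 1) * (\<mu> ^ Suc (Suc n) / fact (Suc (Suc n)))
        = real (Suc n) * (real (Suc (Suc n)) * (\<mu> ^ Suc (Suc n) / fact (Suc (Suc n))))" by simp
    also have "\<dots> = \<mu> * \<mu> * (\<mu> ^ n / fact n)"
      by (simp only: Suc_mult_power_div_fact mult.left_commute[of "real (Suc n)"])
    finally show ?thesis by (simp add: power2_eq_square mult_ac)
  qed
  ultimately have "(\<lambda>n. real (Suc (Suc n)) * (real (Suc (Suc n)) - 1) *
      (\<mu> ^ Suc (Suc n) / fact (Suc (Suc n)) * exp (-\<mu>))) sums \<mu>\<^sup>2"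
    by (simp only: eq)
  then show ?thesis by (subst (asm) sums_Suc_iff, subst (asm) sums_Suc_iff) simp
qed

lemma poisson_sums_second_moment:
  fixes \<mu> :: real
  shows "(\<lambda>m. (real m)\<^sup>2 * (\<mu> ^ m / fact m * exp (-\<mu>))) sums (\<mu>\<^sup>2 + \<mu>)"
proof -
  have "(real m)\<^sup>2 * c = real m * (real m - 1) * c + real m * c" for m and c :: real
    by (simp add: power2_eq_square algebra_simps)
  then show ?thesis
    using sums_add[OF poisson_sums_factorial_moment2 poisson_sums_mean, of \<mu>] by (simp only:)
qed

section \<open>Campbell's formulas for Poisson point processes\<close>

text \<open>Campbell's formulas are first proved on sets of finite mean measure, where the counts are
  Poisson distributed, and then extended along an exhausting sequence of such sets.\<close>

definition finite_exhaustion :: "'a::topological_space measure \<Rightarrow> (nat \<Rightarrow> 'a set) \<Rightarrow> bool" where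
  "finite_exhaustion \<mu> K \<longleftrightarrow> incseq K \<and> (\<Union>r. K r) = UNIV \<and>
     (\<forall>r. K r \<in> sets borel \<and> emeasure \<mu> (K r) < \<infinity>)"

locale poisson_process =
  fixes M :: "'w measure" and \<Lambda> :: "'b::topological_space measure" and X :: "nat \<Rightarrow> 'w \<Rightarrow> 'b"
  assumes prob_space_M: "prob_space M" and poisson: "poisson_point_process M \<Lambda> X"
begin

sublocale prob_space M by (rule prob_space_M)

definition point_sum :: "('b \<Rightarrow> ennreal) \<Rightarrow> 'w \<Rightarrow> ennreal" where
  "point_sum f \<omega> = (\<Sum>k. f (X k \<omega>))"

lemma sets_mean_measure: "sets \<Lambda> = sets borel"
  using poisson unfolding poisson_point_process_def by auto

lemma measurable_mean_measure: "borel_measurable \<Lambda> = borel_measurable borel"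
  by (rule measurable_cong_sets[OF sets_mean_measure refl])

lemma measurable_point[measurable]: "X k \<in> measurable M borel"
  using poisson unfolding poisson_point_process_def by auto

lemma borel_measurable_point_sum:
  "f \<in> borel_measurable borel \<Longrightarrow> point_sum f \<in> borel_measurable M"
  unfolding point_sum_def
  by (intro borel_measurable_suminf_order measurable_compose[OF measurable_point])

lemma borel_measurable_point_sum_indicator[measurable]:
  "A \<in> sets borel \<Longrightarrow> point_sum (indicator A) \<in> borel_measurable M"
  by (rule borel_measurable_point_sum) simp

lemma point_sum_cmult: "point_sum (\<lambda>x. c * u x) \<omega> = c * point_sum u \<omega>"
  unfolding point_sum_def by simp

lemma point_sum_add: "point_sum (\<lambda>x. v x + u x) \<omega> = point_sum v \<omega> + point_sum u \<omega>"
  unfolding point_sum_def by (rule suminf_add[symmetric]) auto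

lemma point_sum_SUP: "incseq U \<Longrightarrow> point_sum (\<lambda>x. SUP i. U i x) \<omega> = (SUP i. point_sum (U i) \<omega>)"
  unfolding point_sum_def by (rule ennreal_suminf_SUP_eq) (auto simp: incseq_def le_fun_def)

lemma point_sum_mono: "(\<And>x. u x \<le> v x) \<Longrightarrow> point_sum u \<omega> \<le> point_sum v \<omega>"
  unfolding point_sum_def by (intro suminf_le) auto

lemma measurable_count:
  assumes "A \<in> sets borel" "emeasure \<Lambda> A < \<infinity>"
  shows "pp_count X A \<in> measurable M (count_space UNIV)"
proof -
  have "indep_vars (\<lambda>_. count_space UNIV) (\<lambda>i. pp_count X ((\<lambda>_. A) i)) {0::nat}"
    using poisson assms unfolding poisson_point_process_def by (auto simp: disjoint_family_on_def)
  then show ?thesis unfolding indep_vars_def by auto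
qed

lemma point_sum_indicator_eq_count:
  assumes "A \<in> sets borel" "emeasure \<Lambda> A < \<infinity>"
  shows "AE \<omega> in M. point_sum (indicator A) \<omega> = of_nat (pp_count X A \<omega>)"
proof -
  have "AE \<omega> in M. finite {k. X k \<omega> \<in> A}"
    using poisson assms unfolding poisson_point_process_def by auto
  then show ?thesis
  proof eventually_elim
    case (elim \<omega>)
    have "point_sum (indicator A) \<omega> = (\<Sum>k\<in>{k. X k \<omega> \<in> A}. indicator A (X k \<omega>))"
      unfolding point_sum_def by (rule suminf_finite[OF elim]) auto
    then show ?case by (simp add: pp_count_def)
  qed
qed

lemma nn_integral_fun_count:
  assumes A: "A \<in> sets borel" "emeasure \<Lambda> A < \<infinity>"
  shows "(\<integral>\<^sup>+\<omega>. f (pp_count X A \<omega>) \<partial>M)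
       = (\<Sum>m. f m * ennreal (measure \<Lambda> A ^ m / fact m * exp (- measure \<Lambda> A)))"
proof -
  define E where "E m = {\<omega> \<in> space M. pp_count X A \<omega> = m}" for m
  have E: "E m \<in> sets M" for m
    using measurable_sets[OF measurable_count[OF A], of "{m}"]
      by (simp add: E_def vimage_def Int_def conj_commute)
  have "(\<integral>\<^sup>+\<omega>. f (pp_count X A \<omega>) \<partial>M) = (\<integral>\<^sup>+\<omega>. (\<Sum>m. f m * indicator (E m) \<omega>) \<partial>M)"
  proof (rule nn_integral_cong)
    fix \<omega> assume "\<omega> \<in> space M"
    then show "f (pp_count X A \<omega>) = (\<Sum>m. f m * indicator (E m) \<omega>)"
      by (subst suminf_finite[of "{pp_count X A \<omega>}"]) (auto simp: E_def)
  qed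
  also have "\<dots> = (\<Sum>m. f m * emeasure M (E m))"
    using E by (simp add: nn_integral_suminf nn_integral_cmult_indicator)
  also have "\<dots> = (\<Sum>m. f m * ennreal (measure \<Lambda> A ^ m / fact m * exp (- measure \<Lambda> A)))"
    using poisson A E unfolding poisson_point_process_def by (simp add: emeasure_eq_measure E_def)
  finally show ?thesis .
qed

lemma point_count_mean:
  assumes A: "A \<in> sets borel" "emeasure \<Lambda> A < \<infinity>"
  shows "(\<integral>\<^sup>+\<omega>. point_sum (indicator A) \<omega> \<partial>M) = emeasure \<Lambda> A"
proof -
  let ?\<mu> = "measure \<Lambda> A"
  have "(\<integral>\<^sup>+\<omega>. point_sum (indicator A) \<omega> \<partial>M) = (\<integral>\<^sup>+\<omega>. of_nat (pp_count X A \<omega>) \<partial>M)"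
    by (rule nn_integral_cong_AE) (rule point_sum_indicator_eq_count[OF A])
  also have "\<dots> = (\<Sum>m. of_nat m * ennreal (?\<mu> ^ m / fact m * exp (- ?\<mu>)))"
    by (rule nn_integral_fun_count[OF A])
  also have "\<dots> = (\<Sum>m. ennreal (real m * (?\<mu> ^ m / fact m * exp (- ?\<mu>))))"
    by (intro suminf_cong of_nat_mult_ennreal) simp
  also have "\<dots> = ennreal ?\<mu>"
    by (rule suminf_ennreal_eq[OF _ poisson_sums_mean]) simp
  finally show ?thesis using A by (simp add: emeasure_eq_ennreal_measure)
qed

lemma point_count_second_moment:
  assumes A: "A \<in> sets borel" "emeasure \<Lambda> A < \<infinity>"
  shows "(\<integral>\<^sup>+\<omega>. point_sum (indicator A) \<omega> * point_sum (indicator A) \<omega> \<partial>M)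
       = emeasure \<Lambda> A * emeasure \<Lambda> A + emeasure \<Lambda> A"
proof -
  let ?\<mu> = "measure \<Lambda> A"
  have "(\<integral>\<^sup>+\<omega>. point_sum (indicator A) \<omega> * point_sum (indicator A) \<omega> \<partial>M)
      = (\<integral>\<^sup>+\<omega>. of_nat (pp_count X A \<omega>) * of_nat (pp_count X A \<omega>) \<partial>M)"
    by (rule nn_integral_cong_AE) (use point_sum_indicator_eq_count[OF A] in auto)
  also have "\<dots> = (\<Sum>m. of_nat m * of_nat m * ennreal (?\<mu> ^ m / fact m * exp (- ?\<mu>)))"
    by (rule nn_integral_fun_count[OF A])
  also have "\<dots> = (\<Sum>m. ennreal ((real m)\<^sup>2 * (?\<mu> ^ m / fact m * exp (- ?\<mu>))))"
    by (intro suminf_cong) (simp add: of_nat_mult_ennreal power2_eq_square mult.assoc)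
  also have "\<dots> = ennreal (?\<mu>\<^sup>2 + ?\<mu>)"
    by (rule suminf_ennreal_eq[OF _ poisson_sums_second_moment]) simp
  finally show ?thesis using A
    by (simp add: emeasure_eq_ennreal_measure power2_eq_square ennreal_mult)
qed

lemma point_count_product_disjoint:
  assumes A: "A \<in> sets borel" "emeasure \<Lambda> A < \<infinity>" and B: "B \<in> sets borel" "emeasure \<Lambda> B < \<infinity>"
    and AB: "A \<inter> B = {}"
  shows "(\<integral>\<^sup>+\<omega>. point_sum (indicator A) \<omega> * point_sum (indicator B) \<omega> \<partial>M)
       = emeasure \<Lambda> A * emeasure \<Lambda> B"
proof -
  define AB where "AB i = (if i = (0::nat) then A else B)" for i
  have "disjoint_family_on AB {0, 1}" using AB by (auto simp: AB_def disjoint_family_on_def)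
  moreover have "\<forall>i\<in>{0, 1}. AB i \<in> sets borel \<and> emeasure \<Lambda> (AB i) < \<infinity>"
    using A B by (auto simp: AB_def)
  ultimately have "indep_vars (\<lambda>_. count_space UNIV) (\<lambda>i. pp_count X (AB i)) {0, 1}"
    using poisson unfolding poisson_point_process_def by auto
  then have "(\<integral>\<^sup>+\<omega>. of_nat (pp_count X A \<omega>) * of_nat (pp_count X B \<omega>) \<partial>M)
      = (\<integral>\<^sup>+\<omega>. of_nat (pp_count X A \<omega>) \<partial>M) * (\<integral>\<^sup>+\<omega>. of_nat (pp_count X B \<omega>) \<partial>M)"
    using indep_vars_nn_integral_mult[of _ "\<lambda>i. pp_count X (AB i)" "{0, 1}" 0 1]
      by (simp add: AB_def)
  moreover have "(\<integral>\<^sup>+\<omega>. point_sum (indicator A) \<omega> * point_sum (indicator B) \<omega> \<partial>M)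
      = (\<integral>\<^sup>+\<omega>. of_nat (pp_count X A \<omega>) * of_nat (pp_count X B \<omega>) \<partial>M)"
    by (rule nn_integral_cong_AE)
       (use point_sum_indicator_eq_count[OF A] point_sum_indicator_eq_count[OF B] in auto)
  moreover have "(\<integral>\<^sup>+\<omega>. of_nat (pp_count X C \<omega>) \<partial>M) = emeasure \<Lambda> C"
    if "C \<in> sets borel" "emeasure \<Lambda> C < \<infinity>" for C
    using point_count_mean[OF that] nn_integral_cong_AE[OF point_sum_indicator_eq_count[OF that]]
      by simp
  ultimately show ?thesis using A B by simp
qed

lemma point_sum_indicator_Un:
  "A \<inter> B = {} \<Longrightarrow> point_sum (indicator (A \<union> B)) \<omega>
      = point_sum (indicator A) \<omega> + point_sum (indicator B) \<omega>"
  unfolding point_sum_def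
  by (subst suminf_add) (auto intro!: suminf_cong simp: indicator_def)

lemma point_count_product:
  assumes A: "A \<in> sets borel" "emeasure \<Lambda> A < \<infinity>" and B: "B \<in> sets borel" "emeasure \<Lambda> B < \<infinity>"
  shows "(\<integral>\<^sup>+\<omega>. point_sum (indicator A) \<omega> * point_sum (indicator B) \<omega> \<partial>M)
       = emeasure \<Lambda> A * emeasure \<Lambda> B + emeasure \<Lambda> (A \<inter> B)"
proof -
  let ?A = "A - B" and ?B = "B - A" and ?C = "A \<inter> B"
  let ?N = "\<lambda>A. point_sum (indicator A)"
  have fin: "S \<in> sets borel" "emeasure \<Lambda> S < \<infinity>" if "S \<in> {?A, ?B, ?C}" for S
    using that A B sets_mean_measure by (auto intro: le_less_trans[OF emeasure_mono])
  have eA: "A = ?A \<union> ?C" and eB: "B = ?B \<union> ?C" by auto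
  have NA: "?N A \<omega> = ?N ?A \<omega> + ?N ?C \<omega>" for \<omega> by (subst eA, rule point_sum_indicator_Un) auto
  have NB: "?N B \<omega> = ?N ?B \<omega> + ?N ?C \<omega>" for \<omega> by (subst eB, rule point_sum_indicator_Un) auto
  have LA: "emeasure \<Lambda> A = emeasure \<Lambda> ?A + emeasure \<Lambda> ?C"
    using fin sets_mean_measure by (subst eA, subst plus_emeasure) auto
  have LB: "emeasure \<Lambda> B = emeasure \<Lambda> ?B + emeasure \<Lambda> ?C"
    using fin sets_mean_measure by (subst eB, subst plus_emeasure) auto
  have [measurable]: "?A \<in> sets borel" "?B \<in> sets borel" "?C \<in> sets borel" using fin by auto
  have "(\<integral>\<^sup>+\<omega>. ?N A \<omega> * ?N B \<omega> \<partial>M) =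
     (\<integral>\<^sup>+\<omega>. (?N ?A \<omega> * ?N ?B \<omega> + ?N ?A \<omega> * ?N ?C \<omega>) + (?N ?C \<omega> * ?N ?B \<omega> + ?N ?C \<omega> * ?N ?C \<omega>) \<partial>M)"
    unfolding NA NB by (simp add: algebra_simps)
  also have "\<dots> = ((\<integral>\<^sup>+\<omega>. ?N ?A \<omega> * ?N ?B \<omega> \<partial>M) + (\<integral>\<^sup>+\<omega>. ?N ?A \<omega> * ?N ?C \<omega> \<partial>M))
       + ((\<integral>\<^sup>+\<omega>. ?N ?C \<omega> * ?N ?B \<omega> \<partial>M) + (\<integral>\<^sup>+\<omega>. ?N ?C \<omega> * ?N ?C \<omega> \<partial>M))"
    by (simp add: nn_integral_add)
  also have "\<dots> = (emeasure \<Lambda> ?A * emeasure \<Lambda> ?B + emeasure \<Lambda> ?A * emeasure \<Lambda> ?C)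
       + (emeasure \<Lambda> ?C * emeasure \<Lambda> ?B + (emeasure \<Lambda> ?C * emeasure \<Lambda> ?C + emeasure \<Lambda> ?C))"
  proof -
    have "?A \<inter> ?B = {}" "?A \<inter> ?C = {}" "?C \<inter> ?B = {}" by auto
    with fin show ?thesis
      by (simp add: point_count_product_disjoint point_count_second_moment)
  qed
  also have "\<dots> = emeasure \<Lambda> A * emeasure \<Lambda> B + emeasure \<Lambda> (A \<inter> B)"
    unfolding LA LB by (simp add: distrib_left distrib_right ac_simps)
  finally show ?thesis .
qed

lemma point_sum_indicator_Int:
  "point_sum (\<lambda>x. indicator A x * indicator K x) \<omega> = point_sum (indicator (A \<inter> K)) \<omega>"
  unfolding point_sum_def by (simp add: indicator_inter_arith)

lemma nn_integral_indicator_Int: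
  "A \<in> sets borel \<Longrightarrow> K \<in> sets borel \<Longrightarrow> (\<integral>\<^sup>+x. indicator A x * indicator K x \<partial>\<Lambda>) = emeasure \<Lambda> (A \<inter> K)"
  using sets_mean_measure by (simp add: indicator_inter_arith[symmetric])

lemma emeasure_Int_finite:
  "K \<in> sets borel \<Longrightarrow> emeasure \<Lambda> K < \<infinity> \<Longrightarrow> A \<in> sets borel \<Longrightarrow> emeasure \<Lambda> (A \<inter> K) < \<infinity>"
  using sets_mean_measure by (auto intro: le_less_trans[OF emeasure_mono])

lemma point_sum_restrict_functional:
  fixes Z :: "'w \<Rightarrow> ennreal" and K :: "'b set"
  assumes Z[measurable]: "Z \<in> borel_measurable M" and K[measurable]: "K \<in> sets borel"
  defines "L \<equiv> (\<lambda>f. \<integral>\<^sup>+\<omega>. point_sum (\<lambda>x. f x * indicator K x) \<omega> * Z \<omega> \<partial>M)"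
  shows "\<And>u c. u \<in> borel_measurable borel \<Longrightarrow> L (\<lambda>x. c * u x) = c * L u"
    and "\<And>u v. u \<in> borel_measurable borel \<Longrightarrow> v \<in> borel_measurable borel
        \<Longrightarrow> L (\<lambda>x. v x + u x) = L v + L u"
    and "\<And>U. (\<And>i. U i \<in> borel_measurable borel) \<Longrightarrow> incseq U \<Longrightarrow> L (SUP i. U i) = (SUP i. L (U i))"
proof -
  have meas: "(\<lambda>\<omega>. point_sum (\<lambda>x. f x * indicator K x) \<omega> * Z \<omega>) \<in> borel_measurable M"
    if [measurable]: "f \<in> borel_measurable borel" for f :: "'b \<Rightarrow> ennreal"
  proof -
    note [measurable] = borel_measurable_point_sum[of "\<lambda>x. f x * indicator K x"]
    show ?thesis by measurable
  qed
  show "L (\<lambda>x. c * u x) = c * L u" if "u \<in> borel_measurable borel" for u c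
    unfolding L_def using nn_integral_cmult[OF meas[OF that], of c]
    by (simp add: mult.assoc point_sum_cmult)
  show "L (\<lambda>x. v x + u x) = L v + L u"
    if "u \<in> borel_measurable borel" "v \<in> borel_measurable borel" for u v
    unfolding L_def using nn_integral_add[OF meas[OF that(2)] meas[OF that(1)]]
    by (simp add: distrib_right point_sum_add)
  show "L (SUP i. U i) = (SUP i. L (U i))"
    if U: "\<And>i. U i \<in> borel_measurable borel" and inc: "incseq U" for U
  proof -
    have incK: "incseq (\<lambda>i x. U i x * indicator K x)"
      using inc by (auto simp: incseq_def le_fun_def intro: mult_right_mono)
    then have "incseq (\<lambda>i \<omega>. point_sum (\<lambda>x. U i x * indicator K x) \<omega> * Z \<omega>)"
      using inc unfolding incseq_def le_fun_def by (auto intro!: mult_right_mono point_sum_mono)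
    note MCT = nn_integral_monotone_convergence_SUP[OF this meas[OF U]]
    have "point_sum (\<lambda>x. (SUP i. U i) x * indicator K x) \<omega>
        = (SUP i. point_sum (\<lambda>x. U i x * indicator K x) \<omega>)"
      for \<omega> by (simp only: SUP_apply SUP_mult_right_ennreal point_sum_SUP[OF incK])
    then show ?thesis unfolding L_def MCT[symmetric] by (simp add: SUP_mult_right_ennreal)
  qed
qed

lemma mean_measure_restrict_functional:
  fixes w :: "'b \<Rightarrow> ennreal" and K :: "'b set" and c :: ennreal
  assumes w[measurable]: "w \<in> borel_measurable borel" and K[measurable]: "K \<in> sets borel"
  defines "L \<equiv> (\<lambda>f. c * (\<integral>\<^sup>+x. f x * indicator K x \<partial>\<Lambda>) + (\<integral>\<^sup>+x. f x * w x * indicator K x \<partial>\<Lambda>))"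
  shows "\<And>u a. u \<in> borel_measurable borel \<Longrightarrow> L (\<lambda>x. a * u x) = a * L u"
    and "\<And>u v. u \<in> borel_measurable borel \<Longrightarrow> v \<in> borel_measurable borel
        \<Longrightarrow> L (\<lambda>x. v x + u x) = L v + L u"
    and "\<And>U. (\<And>i. U i \<in> borel_measurable borel) \<Longrightarrow> incseq U \<Longrightarrow> L (SUP i. U i) = (SUP i. L (U i))"
proof -
  have meas: "(\<lambda>x. u x * indicator K x) \<in> borel_measurable \<Lambda>"
    "(\<lambda>x. u x * w x * indicator K x) \<in> borel_measurable \<Lambda>"
    if "u \<in> borel_measurable borel" for u :: "'b \<Rightarrow> ennreal"
    using that unfolding measurable_mean_measure by auto
  show "L (\<lambda>x. a * u x) = a * L u" if "u \<in> borel_measurable borel" for u a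
    unfolding L_def using nn_integral_cmult[OF meas(1)[OF that], of a]
        nn_integral_cmult[OF meas(2)[OF that], of a]
    by (simp add: mult.assoc distrib_left mult.left_commute)
  show "L (\<lambda>x. v x + u x) = L v + L u"
    if "u \<in> borel_measurable borel" "v \<in> borel_measurable borel" for u v
  proof -
    have "(\<integral>\<^sup>+x. (v x + u x) * indicator K x \<partial>\<Lambda>)
        = (\<integral>\<^sup>+x. v x * indicator K x \<partial>\<Lambda>) + (\<integral>\<^sup>+x. u x * indicator K x \<partial>\<Lambda>)"
      by (subst nn_integral_add[OF meas(1)[OF that(2)] meas(1)[OF that(1)], symmetric])
         (simp add: distrib_right)
    moreover have "(\<integral>\<^sup>+x. (v x + u x) * w x * indicator K x \<partial>\<Lambda>)
        = (\<integral>\<^sup>+x. v x * w x * indicator K x \<partial>\<Lambda>) + (\<integral>\<^sup>+x. u x * w x * indicator K x \<partial>\<Lambda>)"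
      by (subst nn_integral_add[OF meas(2)[OF that(2)] meas(2)[OF that(1)], symmetric])
         (simp add: distrib_right)
    ultimately show ?thesis unfolding L_def by (simp add: distrib_left ac_simps)
  qed
  show "L (SUP i. U i) = (SUP i. L (U i))"
    if U: "\<And>i. U i \<in> borel_measurable borel" and inc: "incseq U" for U
  proof -
    have inc1: "incseq (\<lambda>i x. U i x * indicator K x)"
      and inc2: "incseq (\<lambda>i x. U i x * w x * indicator K x)"
      using inc by (auto simp: incseq_def le_fun_def intro!: mult_right_mono)
    have SUP_apply': "(SUP i. U i) x = (SUP i. U i x)" for x by (simp only: SUP_apply)
    have e1: "(\<integral>\<^sup>+x. (SUP i. U i) x * indicator K x \<partial>\<Lambda>) = (SUP i. \<integral>\<^sup>+x. U i x * indicator K x \<partial>\<Lambda>)"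
      using nn_integral_monotone_convergence_SUP[OF inc1 meas(1)[OF U]]
      by (simp only: SUP_apply' SUP_mult_right_ennreal)
    have e2: "(\<integral>\<^sup>+x. (SUP i. U i) x * w x * indicator K x \<partial>\<Lambda>)
        = (SUP i. \<integral>\<^sup>+x. U i x * w x * indicator K x \<partial>\<Lambda>)"
      using nn_integral_monotone_convergence_SUP[OF inc2 meas(2)[OF U]]
      by (simp only: SUP_apply' SUP_mult_right_ennreal)
    have i1: "incseq (\<lambda>i. c * \<integral>\<^sup>+x. U i x * indicator K x \<partial>\<Lambda>)"
      and i2: "incseq (\<lambda>i. \<integral>\<^sup>+x. U i x * w x * indicator K x \<partial>\<Lambda>)"
      using inc1 inc2 by (auto simp: incseq_def le_fun_def intro!: mult_left_mono nn_integral_mono)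
    show ?thesis unfolding L_def e1 e2
      by (simp add: SUP_mult_left_ennreal ennreal_SUP_add[OF i1 i2])
  qed
qed

lemma campbell_mean_restrict:
  assumes K: "K \<in> sets borel" "emeasure \<Lambda> K < \<infinity>" and f: "f \<in> borel_measurable borel"
  shows "(\<integral>\<^sup>+\<omega>. point_sum (\<lambda>x. f x * indicator K x) \<omega> \<partial>M) = (\<integral>\<^sup>+x. f x * indicator K x \<partial>\<Lambda>)"
proof -
  have one: "(\<lambda>_. 1::ennreal) \<in> borel_measurable M" "(\<lambda>_. 1::ennreal) \<in> borel_measurable borel"
    by auto
  have "(\<lambda>f. \<integral>\<^sup>+\<omega>. point_sum (\<lambda>x. f x * indicator K x) \<omega> * 1 \<partial>M) f =
        (\<lambda>f. 0 * (\<integral>\<^sup>+x. f x * indicator K x \<partial>\<Lambda>) + (\<integral>\<^sup>+x. f x * 1 * indicator K x \<partial>\<Lambda>)) f"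
  proof (rule borel_measurable_induct_functional_eq[OF f])
    fix A :: "'b set" assume A: "A \<in> sets borel"
    show "(\<lambda>f. \<integral>\<^sup>+\<omega>. point_sum (\<lambda>x. f x * indicator K x) \<omega> * 1 \<partial>M) (indicator A) =
        (\<lambda>f. 0 * (\<integral>\<^sup>+x. f x * indicator K x \<partial>\<Lambda>) + (\<integral>\<^sup>+x. f x * 1 * indicator K x \<partial>\<Lambda>)) (indicator A)"
      using A K point_count_mean[of "A \<inter> K"] emeasure_Int_finite[OF K A]
      by (simp add: point_sum_indicator_Int nn_integral_indicator_Int)
  qed (fact point_sum_restrict_functional[OF one(1) K(1)]
      mean_measure_restrict_functional[OF one(2) K(1)])+
  then show ?thesis by simp
qed

lemma campbell_product_indicator_restrict:
  assumes K: "K \<in> sets borel" "emeasure \<Lambda> K < \<infinity>" and A: "A \<in> sets borel"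
    and h: "h \<in> borel_measurable borel"
  shows "(\<integral>\<^sup>+\<omega>. point_sum (\<lambda>x. h x * indicator K x) \<omega> * point_sum (indicator (A \<inter> K)) \<omega> \<partial>M) =
     emeasure \<Lambda> (A \<inter> K) * (\<integral>\<^sup>+x. h x * indicator K x \<partial>\<Lambda>)
         + (\<integral>\<^sup>+x. h x * indicator A x * indicator K x \<partial>\<Lambda>)"
proof -
  have Z: "point_sum (indicator (A \<inter> K)) \<in> borel_measurable M" using A K by measurable
  have w: "indicator A \<in> borel_measurable borel" using A by auto
  show ?thesis
  proof (rule borel_measurable_induct_functional_eq[OF h,
        where LA = "\<lambda>h. \<integral>\<^sup>+\<omega>. point_sum (\<lambda>x. h x * indicator K x) \<omega>
            * point_sum (indicator (A \<inter> K)) \<omega> \<partial>M"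
          and LB = "\<lambda>h. emeasure \<Lambda> (A \<inter> K) * (\<integral>\<^sup>+x. h x * indicator K x \<partial>\<Lambda>)
                       + (\<integral>\<^sup>+x. h x * indicator A x * indicator K x \<partial>\<Lambda>)"])
    fix B :: "'b set" assume B: "B \<in> sets borel"
    have "A \<inter> K \<inter> (B \<inter> K) = B \<inter> A \<inter> K" by auto
    moreover have "(\<integral>\<^sup>+x. indicator B x * indicator A x * indicator K x \<partial>\<Lambda>)
        = emeasure \<Lambda> (B \<inter> A \<inter> K)"
      using A B K sets_mean_measure by (simp add: indicator_inter_arith[symmetric])
    ultimately show "(\<integral>\<^sup>+\<omega>. point_sum (\<lambda>x. indicator B x * indicator K x) \<omega>
        * point_sum (indicator (A \<inter> K)) \<omega> \<partial>M) =
        emeasure \<Lambda> (A \<inter> K) * (\<integral>\<^sup>+x. indicator B x * indicator K x \<partial>\<Lambda>)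
        + (\<integral>\<^sup>+x. indicator B x * indicator A x * indicator K x \<partial>\<Lambda>)"
      using A B K emeasure_Int_finite[OF K A] emeasure_Int_finite[OF K B]
      by (simp add: point_sum_indicator_Int nn_integral_indicator_Int point_count_product
          mult.commute)
  qed (fact point_sum_restrict_functional[OF Z K(1)] mean_measure_restrict_functional[OF w K(1)])+
qed

lemma campbell_product_restrict:
  assumes K: "K \<in> sets borel" "emeasure \<Lambda> K < \<infinity>"
    and f: "f \<in> borel_measurable borel" and h: "h \<in> borel_measurable borel"
  shows "(\<integral>\<^sup>+\<omega>. point_sum (\<lambda>x. f x * indicator K x) \<omega> * point_sum (\<lambda>x. h x * indicator K x) \<omega> \<partial>M) =
     (\<integral>\<^sup>+x. h x * indicator K x \<partial>\<Lambda>) * (\<integral>\<^sup>+x. f x * indicator K x \<partial>\<Lambda>)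
     + (\<integral>\<^sup>+x. f x * h x * indicator K x \<partial>\<Lambda>)"
proof -
  have [measurable]: "K \<in> sets borel" by (rule K(1))
  have Z: "point_sum (\<lambda>x. h x * indicator K x) \<in> borel_measurable M"
    by (intro borel_measurable_point_sum) (use h in measurable)
  show ?thesis
  proof (rule borel_measurable_induct_functional_eq[OF f,
        where LA = "\<lambda>f. \<integral>\<^sup>+\<omega>. point_sum (\<lambda>x. f x * indicator K x) \<omega>
                       * point_sum (\<lambda>x. h x * indicator K x) \<omega> \<partial>M"
          and LB = "\<lambda>f. (\<integral>\<^sup>+x. h x * indicator K x \<partial>\<Lambda>) * (\<integral>\<^sup>+x. f x * indicator K x \<partial>\<Lambda>)
                       + (\<integral>\<^sup>+x. f x * h x * indicator K x \<partial>\<Lambda>)"])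
    fix A :: "'b set" assume A: "A \<in> sets borel"
    show "(\<integral>\<^sup>+\<omega>. point_sum (\<lambda>x. indicator A x * indicator K x) \<omega>
          * point_sum (\<lambda>x. h x * indicator K x) \<omega> \<partial>M) =
        (\<integral>\<^sup>+x. h x * indicator K x \<partial>\<Lambda>) * (\<integral>\<^sup>+x. indicator A x * indicator K x \<partial>\<Lambda>)
        + (\<integral>\<^sup>+x. indicator A x * h x * indicator K x \<partial>\<Lambda>)"
      using campbell_product_indicator_restrict[OF K A h] A K
      by (simp add: point_sum_indicator_Int nn_integral_indicator_Int mult.commute
          mult.left_commute)
  qed (fact point_sum_restrict_functional[OF Z K(1)] mean_measure_restrict_functional[OF h K(1)])+
qed

lemma nn_integral_SUP_restrict:
  assumes K: "finite_exhaustion \<Lambda> K" and f[measurable]: "f \<in> borel_measurable borel"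
  shows "incseq (\<lambda>r. \<integral>\<^sup>+x. f x * indicator (K r) x \<partial>\<Lambda>)"
    and "(\<integral>\<^sup>+x. f x \<partial>\<Lambda>) = (SUP r. \<integral>\<^sup>+x. f x * indicator (K r) x \<partial>\<Lambda>)"
proof -
  have [measurable]: "K r \<in> sets borel" for r using K by (simp add: finite_exhaustion_def)
  have inc: "incseq (\<lambda>r x. f x * indicator (K r) x)"
    using K
    by (auto simp: finite_exhaustion_def incseq_def le_fun_def indicator_def intro!: mult_left_mono)
  then show "incseq (\<lambda>r. \<integral>\<^sup>+x. f x * indicator (K r) x \<partial>\<Lambda>)"
    by (auto simp: incseq_def le_fun_def intro!: nn_integral_mono)
  have "(\<lambda>x. f x * indicator (K r) x) \<in> borel_measurable \<Lambda>" for r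
    unfolding measurable_mean_measure by measurable
  from nn_integral_monotone_convergence_SUP[OF inc this] K
  show "(\<integral>\<^sup>+x. f x \<partial>\<Lambda>) = (SUP r. \<integral>\<^sup>+x. f x * indicator (K r) x \<partial>\<Lambda>)"
    by (simp add: SUP_mult_indicator_exhaustion finite_exhaustion_def)
qed

lemma point_sum_SUP_restrict:
  assumes K: "finite_exhaustion \<Lambda> K"
  shows "incseq (\<lambda>r. point_sum (\<lambda>x. f x * indicator (K r) x) \<omega>)"
    and "point_sum f \<omega> = (SUP r. point_sum (\<lambda>x. f x * indicator (K r) x) \<omega>)"
proof -
  have inc: "incseq (\<lambda>r x. f x * indicator (K r) x)"
    using K
    by (auto simp: finite_exhaustion_def incseq_def le_fun_def indicator_def intro!: mult_left_mono)
  then show "incseq (\<lambda>r. point_sum (\<lambda>x. f x * indicator (K r) x) \<omega>)"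
    by (auto simp: incseq_def le_fun_def intro!: point_sum_mono)
  have "point_sum f \<omega> = point_sum (\<lambda>x. SUP r. f x * indicator (K r) x) \<omega>"
    using K by (simp add: SUP_mult_indicator_exhaustion finite_exhaustion_def)
  also have "\<dots> = (SUP r. point_sum (\<lambda>x. f x * indicator (K r) x) \<omega>)"
    by (rule point_sum_SUP[OF inc])
  finally show "point_sum f \<omega> = (SUP r. point_sum (\<lambda>x. f x * indicator (K r) x) \<omega>)" .
qed

lemma campbell_mean:
  assumes K: "finite_exhaustion \<Lambda> K" and f[measurable]: "f \<in> borel_measurable borel"
  shows "(\<integral>\<^sup>+\<omega>. point_sum f \<omega> \<partial>M) = (\<integral>\<^sup>+x. f x \<partial>\<Lambda>)"
proof -
  have K': "K r \<in> sets borel" "emeasure \<Lambda> (K r) < \<infinity>" for r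
    using K by (auto simp: finite_exhaustion_def)
  note [measurable] = K'(1)
  have meas: "point_sum (\<lambda>x. f x * indicator (K r) x) \<in> borel_measurable M" for r
    by (intro borel_measurable_point_sum) measurable
  have "incseq (\<lambda>r \<omega>. point_sum (\<lambda>x. f x * indicator (K r) x) \<omega>)"
    using point_sum_SUP_restrict(1)[OF K] by (auto simp: incseq_def le_fun_def)
  have "(\<integral>\<^sup>+\<omega>. point_sum f \<omega> \<partial>M)
      = (\<integral>\<^sup>+\<omega>. (SUP r. point_sum (\<lambda>x. f x * indicator (K r) x) \<omega>) \<partial>M)"
    by (simp only: point_sum_SUP_restrict(2)[OF K, of f])
  also have "\<dots> = (SUP r. \<integral>\<^sup>+x. f x * indicator (K r) x \<partial>\<Lambda>)"
    by (simp only: nn_integral_monotone_convergence_SUP[OF \<open>incseq _\<close> meas]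
        campbell_mean_restrict[OF K' f])
  finally show ?thesis by (simp only: nn_integral_SUP_restrict(2)[OF K f])
qed

lemma campbell_second_moment:
  assumes K: "finite_exhaustion \<Lambda> K" and f[measurable]: "f \<in> borel_measurable borel"
  shows "(\<integral>\<^sup>+\<omega>. point_sum f \<omega> * point_sum f \<omega> \<partial>M)
       = (\<integral>\<^sup>+x. f x \<partial>\<Lambda>) * (\<integral>\<^sup>+x. f x \<partial>\<Lambda>) + (\<integral>\<^sup>+x. f x * f x \<partial>\<Lambda>)"
proof -
  let ?f = "\<lambda>r x. f x * indicator (K r) x"
  have K': "K r \<in> sets borel" "emeasure \<Lambda> (K r) < \<infinity>" for r
    using K by (auto simp: finite_exhaustion_def)
  note inc = point_sum_SUP_restrict(1)[OF K, of f]
  note [measurable] = K'(1)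
  have meas: "point_sum (?f r) \<in> borel_measurable M" for r
    by (intro borel_measurable_point_sum) measurable
  have "incseq (\<lambda>r \<omega>. point_sum (?f r) \<omega> * point_sum (?f r) \<omega>)"
    using inc by (auto simp: incseq_def le_fun_def intro!: mult_mono)
  note MCT = nn_integral_monotone_convergence_SUP[OF this]
  have "(\<integral>\<^sup>+\<omega>. point_sum f \<omega> * point_sum f \<omega> \<partial>M)
      = (\<integral>\<^sup>+\<omega>. (SUP r. point_sum (?f r) \<omega> * point_sum (?f r) \<omega>) \<partial>M)"
    by (simp only: point_sum_SUP_restrict(2)[OF K, of f] SUP_mult_SUP_incseq_ennreal[OF inc inc])
  also have "\<dots> = (SUP r. (\<integral>\<^sup>+x. ?f r x \<partial>\<Lambda>) * (\<integral>\<^sup>+x. ?f r x \<partial>\<Lambda>)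
      + (\<integral>\<^sup>+x. f x * f x * indicator (K r) x \<partial>\<Lambda>))"
    by (subst MCT) (use meas in \<open>simp_all add: campbell_product_restrict[OF K' f f]\<close>)
  also have "\<dots> = (\<integral>\<^sup>+x. f x \<partial>\<Lambda>) * (\<integral>\<^sup>+x. f x \<partial>\<Lambda>) + (\<integral>\<^sup>+x. f x * f x \<partial>\<Lambda>)"
  proof -
    have "(\<lambda>x. f x * f x) \<in> borel_measurable borel" by measurable
    note I1 = nn_integral_SUP_restrict[OF K f] and I2 = nn_integral_SUP_restrict[OF K this]
    have "incseq (\<lambda>r. (\<integral>\<^sup>+x. ?f r x \<partial>\<Lambda>) * (\<integral>\<^sup>+x. ?f r x \<partial>\<Lambda>))"
      using I1(1) by (auto simp: incseq_def intro!: mult_mono)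
    then show ?thesis
      by (simp only: I1(2) I2(2) SUP_mult_SUP_incseq_ennreal[OF I1(1) I1(1)]
          ennreal_SUP_add[OF _ I2(1)])
  qed
  finally show ?thesis .
qed

lemma nn_integral_point_sum_square:
  fixes g :: "'b \<Rightarrow> ennreal"
  assumes g[measurable]: "g \<in> borel_measurable borel"
  shows "(\<integral>\<^sup>+\<omega>. point_sum g \<omega> * point_sum g \<omega> \<partial>M)
       = (\<Sum>k. \<Sum>j. \<integral>\<^sup>+\<omega>. g (X k \<omega>) * g (X j \<omega>) \<partial>M)"
proof -
  have "(\<integral>\<^sup>+\<omega>. point_sum g \<omega> * point_sum g \<omega> \<partial>M)
      = (\<integral>\<^sup>+\<omega>. (\<Sum>k. \<Sum>j. g (X k \<omega>) * g (X j \<omega>)) \<partial>M)"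
    unfolding point_sum_def suminf_mult_suminf_ennreal ..
  also have "\<dots> = (\<Sum>k. \<integral>\<^sup>+\<omega>. (\<Sum>j. g (X k \<omega>) * g (X j \<omega>)) \<partial>M)"
    by (rule nn_integral_suminf) measurable
  also have "\<dots> = (\<Sum>k. \<Sum>j. \<integral>\<^sup>+\<omega>. g (X k \<omega>) * g (X j \<omega>) \<partial>M)"
    by (intro suminf_cong nn_integral_suminf) measurable
  finally show ?thesis .
qed

text \<open>The second factorial moment measure of a Poisson process is \<open>\<Lambda> \<otimes> \<Lambda>\<close>: the diagonal terms sum
  to \<open>\<integral> g\<^sup>2 d\<Lambda>\<close>, which is cancelled from the second moment formula (hence its finiteness).\<close>

lemma nn_integral_sum_distinct_pairs:
  fixes g :: "'b \<Rightarrow> ennreal"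
  assumes K: "finite_exhaustion \<Lambda> K" and g[measurable]: "g \<in> borel_measurable borel"
    and fin: "(\<integral>\<^sup>+x. g x * g x \<partial>\<Lambda>) < \<infinity>"
  shows "(\<Sum>k. \<Sum>j. if j = k then 0 else \<integral>\<^sup>+\<omega>. g (X k \<omega>) * g (X j \<omega>) \<partial>M)
       = (\<integral>\<^sup>+x. g x \<partial>\<Lambda>) * (\<integral>\<^sup>+x. g x \<partial>\<Lambda>)"
proof -
  let ?a = "\<lambda>k j. \<integral>\<^sup>+\<omega>. g (X k \<omega>) * g (X j \<omega>) \<partial>M"
  have gg: "(\<lambda>x. g x * g x) \<in> borel_measurable borel" by measurable
  have diagonal: "(\<Sum>k. ?a k k) = (\<integral>\<^sup>+x. g x * g x \<partial>\<Lambda>)"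
    using campbell_mean[OF K gg] unfolding point_sum_def
    by (subst (asm) nn_integral_suminf) measurable
  have "(\<Sum>k. \<Sum>j. ?a k j) = (\<Sum>k. ?a k k + (\<Sum>j. if j = k then 0 else ?a k j))"
    by (intro suminf_cong suminf_split_off_ennreal)
  then have "(\<Sum>k. ?a k k) + (\<Sum>k. \<Sum>j. if j = k then 0 else ?a k j) = (\<Sum>k. \<Sum>j. ?a k j)"
    by (simp add: suminf_add)
  also have "\<dots> = (\<integral>\<^sup>+x. g x * g x \<partial>\<Lambda>) + (\<integral>\<^sup>+x. g x \<partial>\<Lambda>) * (\<integral>\<^sup>+x. g x \<partial>\<Lambda>)"
    using campbell_second_moment[OF K g] nn_integral_point_sum_square[OF g]
      by (simp add: add.commute)
  finally show ?thesis
    using fin unfolding diagonal by (auto simp: ennreal_add_left_cancel)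
qed

end

section \<open>Shot noise of a marked Poisson process\<close>

locale marked_poisson_process = poisson_process M \<Lambda> X
  for M :: "'w measure" and \<Lambda> :: "'b::topological_space measure" and X :: "nat \<Rightarrow> 'w \<Rightarrow> 'b" +
  fixes H :: "nat \<Rightarrow> 'w \<Rightarrow> real"
  assumes indep_marks: "indep_vars (\<lambda>_. borel) H UNIV"
    and indep_marks_points: "indep_rvs M (PiM UNIV (\<lambda>_. borel)) (\<lambda>\<omega> k. X k \<omega>)
                                         (PiM UNIV (\<lambda>_. borel)) (\<lambda>\<omega> k. H k \<omega>)"
begin

lemma measurable_mark[measurable]: "H k \<in> borel_measurable M"
  using indep_marks unfolding indep_vars_def by auto

lemma nn_integral_point_mark:
  fixes g :: "'b \<Rightarrow> ennreal"
  assumes [measurable]: "g \<in> borel_measurable borel"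
  shows "(\<integral>\<^sup>+\<omega>. g (X k \<omega>) * ennreal (H k \<omega>) \<partial>M)
       = (\<integral>\<^sup>+\<omega>. g (X k \<omega>) \<partial>M) * (\<integral>\<^sup>+\<omega>. ennreal (H k \<omega>) \<partial>M)"
proof -
  have "indep_var borel (\<lambda>\<omega>. (\<lambda>x. g (x k)) (\<lambda>k. X k \<omega>)) borel (\<lambda>\<omega>. (\<lambda>h. ennreal (h k)) (\<lambda>k. H k \<omega>))"
    by (rule indep_rvs_compose_indep_var[OF indep_marks_points]) measurable
  then show ?thesis by (simp add: indep_var_nn_integral_mult)
qed

lemma nn_integral_point_mark_pair:
  fixes g :: "'b \<Rightarrow> ennreal"
  assumes [measurable]: "g \<in> borel_measurable borel"
    and m1: "\<And>k. (\<integral>\<^sup>+\<omega>. ennreal (H k \<omega>) \<partial>M) = m1"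
    and m2: "\<And>k. (\<integral>\<^sup>+\<omega>. ennreal (H k \<omega>) * ennreal (H k \<omega>) \<partial>M) = m2"
  shows "(\<integral>\<^sup>+\<omega>. (g (X k \<omega>) * g (X j \<omega>)) * (ennreal (H k \<omega>) * ennreal (H j \<omega>)) \<partial>M)
       = (\<integral>\<^sup>+\<omega>. g (X k \<omega>) * g (X j \<omega>) \<partial>M) * (if k = j then m2 else m1 * m1)"
proof -
  have "indep_var borel (\<lambda>\<omega>. (\<lambda>x. g (x k) * g (x j)) (\<lambda>k. X k \<omega>))
                  borel (\<lambda>\<omega>. (\<lambda>h. ennreal (h k) * ennreal (h j)) (\<lambda>k. H k \<omega>))"
    by (rule indep_rvs_compose_indep_var[OF indep_marks_points]) measurable
  moreover have "(\<integral>\<^sup>+\<omega>. ennreal (H k \<omega>) * ennreal (H j \<omega>) \<partial>M) = (if k = j then m2 else m1 * m1)"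
    using m1 m2 indep_vars_nn_integral_mult[OF indep_marks, of k j ennreal ennreal] by auto
  ultimately show ?thesis by (simp add: indep_var_nn_integral_mult)
qed

lemma shot_noise_nn_moments:
  fixes g :: "'b \<Rightarrow> ennreal"
  assumes K: "finite_exhaustion \<Lambda> K" and g[measurable]: "g \<in> borel_measurable borel"
    and m1: "\<And>k. (\<integral>\<^sup>+\<omega>. ennreal (H k \<omega>) \<partial>M) = m1"
    and m2: "\<And>k. (\<integral>\<^sup>+\<omega>. ennreal (H k \<omega>) * ennreal (H k \<omega>) \<partial>M) = m2"
    and fin: "(\<integral>\<^sup>+x. g x * g x \<partial>\<Lambda>) < \<infinity>"
  defines "W \<equiv> \<lambda>\<omega>. \<Sum>k. ennreal (H k \<omega>) * g (X k \<omega>)"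
  shows "(\<integral>\<^sup>+\<omega>. W \<omega> \<partial>M) = m1 * (\<integral>\<^sup>+x. g x \<partial>\<Lambda>)"
    and "(\<integral>\<^sup>+\<omega>. W \<omega> * W \<omega> \<partial>M)
       = m2 * (\<integral>\<^sup>+x. g x * g x \<partial>\<Lambda>) + m1 * m1 * ((\<integral>\<^sup>+x. g x \<partial>\<Lambda>) * (\<integral>\<^sup>+x. g x \<partial>\<Lambda>))"
proof -
  let ?a = "\<lambda>k j. \<integral>\<^sup>+\<omega>. g (X k \<omega>) * g (X j \<omega>) \<partial>M"
  have "(\<integral>\<^sup>+\<omega>. W \<omega> \<partial>M) = (\<Sum>k. \<integral>\<^sup>+\<omega>. ennreal (H k \<omega>) * g (X k \<omega>) \<partial>M)"
    unfolding W_def by (rule nn_integral_suminf) measurable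
  also have "\<dots> = m1 * (\<Sum>k. \<integral>\<^sup>+\<omega>. g (X k \<omega>) \<partial>M)"
    using nn_integral_point_mark[OF g] m1 by (simp add: mult.commute)
  also have "(\<Sum>k. \<integral>\<^sup>+\<omega>. g (X k \<omega>) \<partial>M) = (\<integral>\<^sup>+x. g x \<partial>\<Lambda>)"
    using campbell_mean[OF K g] unfolding point_sum_def
      by (subst (asm) nn_integral_suminf) measurable
  finally show "(\<integral>\<^sup>+\<omega>. W \<omega> \<partial>M) = m1 * (\<integral>\<^sup>+x. g x \<partial>\<Lambda>)" .
  have "W \<omega> * W \<omega> = (\<Sum>k. \<Sum>j. (g (X k \<omega>) * g (X j \<omega>)) * (ennreal (H k \<omega>) * ennreal (H j \<omega>)))" for \<omega>
    unfolding W_def suminf_mult_suminf_ennreal by (intro suminf_cong) (simp only: ac_simps)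
  then have "(\<integral>\<^sup>+\<omega>. W \<omega> * W \<omega> \<partial>M)
      = (\<Sum>k. \<Sum>j. \<integral>\<^sup>+\<omega>. (g (X k \<omega>) * g (X j \<omega>)) * (ennreal (H k \<omega>) * ennreal (H j \<omega>)) \<partial>M)"
    by (simp only:)
       (subst nn_integral_suminf, measurable, intro suminf_cong nn_integral_suminf, measurable)
  also have "\<dots> = (\<Sum>k. \<Sum>j. ?a k j * (if k = j then m2 else m1 * m1))"
    by (simp only: nn_integral_point_mark_pair[OF g m1 m2])
  also have "\<dots> = m2 * (\<Sum>k. ?a k k) + m1 * m1 * (\<Sum>k. \<Sum>j. if j = k then 0 else ?a k j)"
    by (rule suminf_suminf_diagonal_weights_ennreal)
  also have "(\<Sum>k. ?a k k) = (\<integral>\<^sup>+x. g x * g x \<partial>\<Lambda>)"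
  proof -
    have "(\<lambda>x. g x * g x) \<in> borel_measurable borel" by measurable
    from campbell_mean[OF K this] show ?thesis
      unfolding point_sum_def by (subst (asm) nn_integral_suminf) measurable
  qed
  finally show "(\<integral>\<^sup>+\<omega>. W \<omega> * W \<omega> \<partial>M)
      = m2 * (\<integral>\<^sup>+x. g x * g x \<partial>\<Lambda>) + m1 * m1 * ((\<integral>\<^sup>+x. g x \<partial>\<Lambda>) * (\<integral>\<^sup>+x. g x \<partial>\<Lambda>))"
    by (simp only: nn_integral_sum_distinct_pairs[OF K g fin])
qed


lemma shot_noise_mean_variance:
  fixes g :: "'b \<Rightarrow> real"
  assumes K: "finite_exhaustion \<Lambda> K" and g[measurable]: "g \<in> borel_measurable borel"
    and g_nonneg: "\<And>x. g x \<ge> 0"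
    and g1: "(\<integral>\<^sup>+x. ennreal (g x) \<partial>\<Lambda>) = ennreal \<gamma>1"
    and g2: "(\<integral>\<^sup>+x. ennreal ((g x)\<^sup>2) \<partial>\<Lambda>) = ennreal \<gamma>2"
    and H_nonneg: "\<And>k. AE \<omega> in M. H k \<omega> \<ge> 0"
    and H1: "\<And>k. (\<integral>\<^sup>+\<omega>. ennreal (H k \<omega>) \<partial>M) = ennreal \<mu>1"
    and H2: "\<And>k. (\<integral>\<^sup>+\<omega>. ennreal ((H k \<omega>)\<^sup>2) \<partial>M) = ennreal \<mu>2"
    and P: "P \<ge> 0" and nonneg: "\<gamma>1 \<ge> 0" "\<gamma>2 \<ge> 0" "\<mu>1 \<ge> 0" "\<mu>2 \<ge> 0"
  defines "I \<equiv> \<lambda>\<omega>. enn2real (\<Sum>k. ennreal (P * H k \<omega> * g (X k \<omega>)))"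
  shows "expectation I = P * \<mu>1 * \<gamma>1"
    and "expectation (\<lambda>\<omega>. (I \<omega> - expectation I)\<^sup>2) = P\<^sup>2 * \<mu>2 * \<gamma>2"
proof -
  define W where "W \<omega> = (\<Sum>k. ennreal (H k \<omega>) * ennreal (g (X k \<omega>)))" for \<omega>
  have [measurable]: "W \<in> borel_measurable M" unfolding W_def by measurable
  have gg: "(\<integral>\<^sup>+x. ennreal (g x) * ennreal (g x) \<partial>\<Lambda>) = ennreal \<gamma>2"
    using g2 g_nonneg by (simp add: ennreal_mult power2_eq_square)
  have HH: "(\<integral>\<^sup>+\<omega>. ennreal (H k \<omega>) * ennreal (H k \<omega>) \<partial>M) = ennreal \<mu>2" for k
    by (simp add: nn_integral_ennreal_square_AE[OF H_nonneg] H2)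
  note moments = shot_noise_nn_moments[OF K _ H1 HH, of "\<lambda>x. ennreal (g x)", folded W_def]
  have "(\<integral>\<^sup>+\<omega>. ennreal P * W \<omega> \<partial>M) = ennreal (P * \<mu>1 * \<gamma>1)"
    using moments(1) P nonneg by (simp add: nn_integral_cmult g1 gg ennreal_mult mult.assoc)
  moreover have "(\<integral>\<^sup>+\<omega>. (ennreal P * W \<omega>) * (ennreal P * W \<omega>) \<partial>M)
      = ennreal (P\<^sup>2 * (\<mu>2 * \<gamma>2 + (\<mu>1 * \<gamma>1)\<^sup>2))"
  proof -
    have "(\<integral>\<^sup>+\<omega>. (ennreal P * W \<omega>) * (ennreal P * W \<omega>) \<partial>M)
        = ennreal P * ennreal P * (\<integral>\<^sup>+\<omega>. W \<omega> * W \<omega> \<partial>M)"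
      by (subst nn_integral_cmult[symmetric]) (simp_all add: ac_simps)
    then show ?thesis using moments(2) P nonneg
      by (simp add: g1 gg ennreal_mult[symmetric] ennreal_plus[symmetric]
          power2_eq_square algebra_simps
               del: ennreal_plus)
  qed
  moreover have "I = (\<lambda>\<omega>. enn2real (ennreal P * W \<omega>))"
  proof
    fix \<omega>
    have "ennreal (P * H k \<omega> * g (X k \<omega>))
        = ennreal P * (ennreal (H k \<omega>) * ennreal (g (X k \<omega>)))" for k
      using P g_nonneg by (rule ennreal_mult_mult_nonneg)
    then show "I \<omega> = enn2real (ennreal P * W \<omega>)" unfolding I_def W_def
      by (simp only: ennreal_suminf_cmult)
  qed
  moreover have "P\<^sup>2 * (\<mu>2 * \<gamma>2 + (\<mu>1 * \<gamma>1)\<^sup>2) - (P * \<mu>1 * \<gamma>1)\<^sup>2 = P\<^sup>2 * \<mu>2 * \<gamma>2"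
    by (simp add: power2_eq_square algebra_simps)
  ultimately show "expectation I = P * \<mu>1 * \<gamma>1"
    and "expectation (\<lambda>\<omega>. (I \<omega> - expectation I)\<^sup>2) = P\<^sup>2 * \<mu>2 * \<gamma>2"
    using mean_variance_enn2real[of "\<lambda>\<omega>. ennreal P * W \<omega>"] P nonneg by simp_all
qed

end

section \<open>Sums of independent marked samples\<close>

lemma (in prob_space) nn_integral_sum_square_pairwise:
  fixes a :: "nat \<Rightarrow> 'a \<Rightarrow> ennreal"
  assumes S: "finite S" and meas: "\<And>k. k \<in> S \<Longrightarrow> a k \<in> borel_measurable M"
    and pair: "\<And>k j. k \<in> S \<Longrightarrow> j \<in> S \<Longrightarrow> (\<integral>\<^sup>+\<omega>. a k \<omega> * a j \<omega> \<partial>M) = (if k = j then \<nu> else \<mu> * \<mu>)"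
  shows "(\<integral>\<^sup>+\<omega>. (\<Sum>k\<in>S. a k \<omega>) * (\<Sum>k\<in>S. a k \<omega>) \<partial>M)
       = of_nat (card S) * (\<nu> + of_nat (card S - 1) * (\<mu> * \<mu>))"
proof -
  have "(\<integral>\<^sup>+\<omega>. (\<Sum>k\<in>S. a k \<omega>) * (\<Sum>k\<in>S. a k \<omega>) \<partial>M) = (\<Sum>k\<in>S. \<Sum>j\<in>S. \<integral>\<^sup>+\<omega>. a k \<omega> * a j \<omega> \<partial>M)"
    unfolding sum_product using meas
    by (subst nn_integral_sum, simp, measurable, intro sum.cong refl nn_integral_sum) auto
  also have "\<dots> = (\<Sum>k\<in>S. \<nu> + of_nat (card S - 1) * (\<mu> * \<mu>))"
    using S by (intro sum.cong refl) (simp add: pair sum_if_eq_ennreal)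
  finally show ?thesis by simp
qed

locale independent_marked_sample = prob_space M for M :: "'a measure" +
  fixes S :: "nat set" and H U :: "nat \<Rightarrow> 'a \<Rightarrow> real" and G :: "real \<Rightarrow> real"
    and \<mu>1 \<mu>2 c1 c2 :: real
  assumes finite_sample: "finite S"
    and indep_H: "indep_vars (\<lambda>_. borel) H UNIV" and H_nonneg: "\<And>k. AE \<omega> in M. H k \<omega> \<ge> 0"
    and H1: "\<And>k. (\<integral>\<^sup>+\<omega>. ennreal (H k \<omega>) \<partial>M) = ennreal \<mu>1"
    and H2: "\<And>k. (\<integral>\<^sup>+\<omega>. ennreal ((H k \<omega>)\<^sup>2) \<partial>M) = ennreal \<mu>2"
    and indep_U: "indep_vars (\<lambda>_. borel) U S"
    and indep_UH: "indep_rvs M (PiM S (\<lambda>_. borel)) (\<lambda>\<omega>. \<lambda>k\<in>S. U k \<omega>)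
                              (PiM UNIV (\<lambda>_. borel)) (\<lambda>\<omega> k. H k \<omega>)"
    and measurable_G[measurable]: "G \<in> borel_measurable borel"
    and GU_nonneg: "AE \<omega> in M. \<forall>k\<in>S. G (U k \<omega>) \<ge> 0"
    and GU1: "\<And>k. k \<in> S \<Longrightarrow> (\<integral>\<^sup>+\<omega>. ennreal (G (U k \<omega>)) \<partial>M) = ennreal c1"
    and GU2: "\<And>k. k \<in> S \<Longrightarrow> (\<integral>\<^sup>+\<omega>. ennreal ((G (U k \<omega>))\<^sup>2) \<partial>M) = ennreal c2"
    and moments_nonneg: "\<mu>1 \<ge> 0" "\<mu>2 \<ge> 0" "c1 \<ge> 0" "c2 \<ge> 0"
begin

lemma measurable_H[measurable]: "H k \<in> borel_measurable M"
  using indep_H unfolding indep_vars_def by auto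

lemma measurable_U[measurable]: "k \<in> S \<Longrightarrow> U k \<in> borel_measurable M"
  using indep_U unfolding indep_vars_def by auto

lemma nn_integral_marks_pair:
  "(\<integral>\<^sup>+\<omega>. ennreal (H k \<omega>) * ennreal (H j \<omega>) \<partial>M) = ennreal (if k = j then \<mu>2 else \<mu>1 * \<mu>1)"
proof (cases "k = j")
  case False
  then show ?thesis
    using indep_vars_nn_integral_mult[OF indep_H, of k j ennreal ennreal] H1 moments_nonneg
    by (simp add: ennreal_mult)
qed (simp add: nn_integral_ennreal_square_AE[OF H_nonneg] H2)

lemma nn_integral_gains_pair:
  assumes "k \<in> S" "j \<in> S"
  shows "(\<integral>\<^sup>+\<omega>. ennreal (G (U k \<omega>)) * ennreal (G (U j \<omega>)) \<partial>M)
       = ennreal (if k = j then c2 else c1 * c1)"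
proof (cases "k = j")
  case True
  have "AE \<omega> in M. G (U k \<omega>) \<ge> 0" using GU_nonneg assms by auto
  with True assms show ?thesis by (simp add: nn_integral_ennreal_square_AE GU2)
next
  case False
  then show ?thesis
    using indep_vars_nn_integral_mult[OF indep_U assms False,
        of "\<lambda>x. ennreal (G x)" "\<lambda>x. ennreal (G x)"]
      GU1 assms moments_nonneg by (simp add: ennreal_mult)
qed

lemma nn_integral_marked_gain:
  assumes "k \<in> S"
  shows "(\<integral>\<^sup>+\<omega>. ennreal (H k \<omega>) * ennreal (G (U k \<omega>)) \<partial>M) = ennreal (\<mu>1 * c1)"
proof -
  have "indep_var borel (\<lambda>\<omega>. (\<lambda>u. ennreal (G (u k))) (\<lambda>k\<in>S. U k \<omega>))
                  borel (\<lambda>\<omega>. (\<lambda>h. ennreal (h k)) (\<lambda>k. H k \<omega>))"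
    by (rule indep_rvs_compose_indep_var[OF indep_UH]) (use assms in measurable)
  then have "(\<integral>\<^sup>+\<omega>. ennreal (G (U k \<omega>)) * ennreal (H k \<omega>) \<partial>M) = ennreal c1 * ennreal \<mu>1"
    using assms by (simp add: indep_var_nn_integral_mult GU1 H1)
  then show ?thesis
    using moments_nonneg by (simp add: mult.commute ennreal_mult)
qed

lemma nn_integral_marked_gain_pair:
  assumes "k \<in> S" "j \<in> S"
  shows "(\<integral>\<^sup>+\<omega>. (ennreal (H k \<omega>) * ennreal (G (U k \<omega>))) * (ennreal (H j \<omega>)
      * ennreal (G (U j \<omega>))) \<partial>M)
       = (if k = j then ennreal (\<mu>2 * c2) else ennreal (\<mu>1 * c1) * ennreal (\<mu>1 * c1))"
proof -
  have "indep_var borel (\<lambda>\<omega>. (\<lambda>u. ennreal (G (u k)) * ennreal (G (u j))) (\<lambda>k\<in>S. U k \<omega>))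
                  borel (\<lambda>\<omega>. (\<lambda>h. ennreal (h k) * ennreal (h j)) (\<lambda>k. H k \<omega>))"
    by (rule indep_rvs_compose_indep_var[OF indep_UH]) (use assms in measurable)
  then have "(\<integral>\<^sup>+\<omega>. (ennreal (G (U k \<omega>)) * ennreal (G (U j \<omega>))) * (ennreal (H k \<omega>)
      * ennreal (H j \<omega>)) \<partial>M)
      = ennreal (if k = j then c2 else c1 * c1) * ennreal (if k = j then \<mu>2 else \<mu>1 * \<mu>1)"
    using assms by (simp add: indep_var_nn_integral_mult nn_integral_gains_pair
        nn_integral_marks_pair)
  then show ?thesis
    using moments_nonneg by (auto simp: ennreal_mult[symmetric] ac_simps)
qed

lemma sum_mean_variance:
  assumes P: "P \<ge> 0"
  defines "Y \<equiv> \<lambda>\<omega>. \<Sum>k\<in>S. P * H k \<omega> * G (U k \<omega>)"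
  shows "expectation Y = P * card S * \<mu>1 * c1"
    and "expectation (\<lambda>\<omega>. (Y \<omega> - expectation Y)\<^sup>2) = P\<^sup>2 * card S * (\<mu>2 * c2 - (\<mu>1 * c1)\<^sup>2)"
proof -
  define a where "a k \<omega> = ennreal P * (ennreal (H k \<omega>) * ennreal (G (U k \<omega>)))" for k \<omega>
  have a_meas: "k \<in> S \<Longrightarrow> a k \<in> borel_measurable M" for k unfolding a_def by measurable
  have "AE \<omega> in M. \<forall>k. H k \<omega> \<ge> 0" using H_nonneg by (simp add: AE_all_countable)
  then have terms_nonneg: "AE \<omega> in M. \<forall>k\<in>S. P * H k \<omega> * G (U k \<omega>) \<ge> 0"
    using GU_nonneg by eventually_elim (use P in auto)
  then have Y_nonneg: "AE \<omega> in M. Y \<omega> \<ge> 0"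
    unfolding Y_def by eventually_elim (rule sum_nonneg, blast)
  have Y_eq: "AE \<omega> in M. ennreal (Y \<omega>) = (\<Sum>k\<in>S. a k \<omega>)"
    using terms_nonneg GU_nonneg
  proof eventually_elim
    case (elim \<omega>)
    then have "ennreal (Y \<omega>) = (\<Sum>k\<in>S. ennreal (P * H k \<omega> * G (U k \<omega>)))"
      unfolding Y_def by (simp add: sum_ennreal)
    then show ?case unfolding a_def using P elim by (simp add: ennreal_mult_mult_nonneg)
  qed
  have single: "(\<integral>\<^sup>+\<omega>. a k \<omega> \<partial>M) = ennreal (P * (\<mu>1 * c1))" if "k \<in> S" for k
    unfolding a_def using P moments_nonneg that
    by (subst nn_integral_cmult) (measurable, simp add: nn_integral_marked_gain ennreal_mult)
  have pair: "(\<integral>\<^sup>+\<omega>. a k \<omega> * a j \<omega> \<partial>M)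
      = (if k = j then ennreal (P\<^sup>2 * (\<mu>2 * c2))
         else ennreal (P * (\<mu>1 * c1)) * ennreal (P * (\<mu>1 * c1)))"
    if "k \<in> S" "j \<in> S" for k j
  proof -
    have "(\<integral>\<^sup>+\<omega>. a k \<omega> * a j \<omega> \<partial>M) = ennreal (P * P) *
        (\<integral>\<^sup>+\<omega>. (ennreal (H k \<omega>) * ennreal (G (U k \<omega>))) * (ennreal (H j \<omega>)
            * ennreal (G (U j \<omega>))) \<partial>M)"
      using that P unfolding a_def
      by (subst nn_integral_cmult[symmetric])
          (measurable, auto intro!: nn_integral_cong simp: ennreal_mult ac_simps)
    also have "\<dots> = ennreal (P * P)
        * (if k = j then ennreal (\<mu>2 * c2) else ennreal (\<mu>1 * c1) * ennreal (\<mu>1 * c1))"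
      by (simp only: nn_integral_marked_gain_pair[OF that])
    finally show ?thesis
      using P moments_nonneg by (auto simp: ennreal_mult[symmetric] power2_eq_square ac_simps)
  qed
  have "(\<integral>\<^sup>+\<omega>. ennreal (Y \<omega>) \<partial>M) = (\<Sum>k\<in>S. \<integral>\<^sup>+\<omega>. a k \<omega> \<partial>M)"
    using a_meas by (simp add: nn_integral_cong_AE[OF Y_eq] nn_integral_sum)
  also have "\<dots> = ennreal (P * card S * \<mu>1 * c1)"
    using P moments_nonneg by (simp add: single ennreal_of_nat_eq_real_of_nat
        ennreal_mult[symmetric] ac_simps)
  finally have EY: "(\<integral>\<^sup>+\<omega>. ennreal (Y \<omega>) \<partial>M) = ennreal (P * card S * \<mu>1 * c1)" .
  have "(\<integral>\<^sup>+\<omega>. ennreal ((Y \<omega>)\<^sup>2) \<partial>M) = (\<integral>\<^sup>+\<omega>. (\<Sum>k\<in>S. a k \<omega>) * (\<Sum>k\<in>S. a k \<omega>) \<partial>M)"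
    using Y_nonneg Y_eq
    by (intro nn_integral_cong_AE, eventually_elim) (simp add: power2_eq_square ennreal_mult)
  also have "\<dots> = of_nat (card S) * (ennreal (P\<^sup>2 * (\<mu>2 * c2))
      + of_nat (card S - 1) * (ennreal (P * (\<mu>1 * c1)) * ennreal (P * (\<mu>1 * c1))))"
    by (rule nn_integral_sum_square_pairwise[OF finite_sample a_meas pair])
  also have "\<dots> = ennreal (P\<^sup>2 * (card S * (\<mu>2 * c2) + card S * real (card S - 1) * (\<mu>1 * c1)\<^sup>2))"
    using P moments_nonneg
    by (simp add: ennreal_of_nat_eq_real_of_nat ennreal_mult[symmetric] ennreal_plus[symmetric]
        power2_eq_square
                  algebra_simps del: ennreal_plus)
  finally have EY2: "(\<integral>\<^sup>+\<omega>. ennreal ((Y \<omega>)\<^sup>2) \<partial>M) = \<dots>" .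
  have Y_meas: "Y \<in> borel_measurable M" unfolding Y_def by measurable
  note mv = mean_variance_of_nn_moments[OF Y_meas Y_nonneg EY EY2]
  show "expectation Y = P * card S * \<mu>1 * c1"
    using mv P moments_nonneg by simp
  have "P\<^sup>2 * (card S * (\<mu>2 * c2) + card S * real (card S - 1) * (\<mu>1 * c1)\<^sup>2)
      - (P * card S * \<mu>1 * c1)\<^sup>2 = P\<^sup>2 * card S * (\<mu>2 * c2 - (\<mu>1 * c1)\<^sup>2)"
    by (cases "card S") (simp_all add: power2_eq_square algebra_simps)
  with mv(2) P moments_nonneg
  show "expectation (\<lambda>\<omega>. (Y \<omega> - expectation Y)\<^sup>2) = P\<^sup>2 * card S * (\<mu>2 * c2 - (\<mu>1 * c1)\<^sup>2)"
    by simp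
qed

end

lemma (in prob_space) nn_integral_power_identically_distributed:
  fixes H :: "nat \<Rightarrow> 'a \<Rightarrow> real"
  assumes dens: "\<And>k. distributed M lborel (H k) (\<lambda>x. ennreal (q x))"
    and nonneg: "\<And>k. AE \<omega> in M. H k \<omega> \<ge> 0" and int: "integrable M (\<lambda>\<omega>. H 0 \<omega> ^ j)"
  shows "(\<integral>\<^sup>+\<omega>. ennreal (H k \<omega> ^ j) \<partial>M) = ennreal (expectation (\<lambda>\<omega>. H 0 \<omega> ^ j))"
proof -
  have "(\<integral>\<^sup>+\<omega>. ennreal (H i \<omega> ^ j) \<partial>M) = (\<integral>\<^sup>+x. ennreal (q x) * ennreal (x ^ j) \<partial>lborel)" for i
    using distributed_nn_integral[OF dens[of i], of "\<lambda>x. ennreal (x ^ j)"] by simp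
  then have "(\<integral>\<^sup>+\<omega>. ennreal (H k \<omega> ^ j) \<partial>M) = (\<integral>\<^sup>+\<omega>. ennreal (H 0 \<omega> ^ j) \<partial>M)" by simp
  also have "\<dots> = ennreal (expectation (\<lambda>\<omega>. H 0 \<omega> ^ j))"
    using nonneg[of 0] by (intro nn_integral_eq_integral int) (auto elim!: eventually_mono)
  finally show ?thesis .
qed

lemma (in prob_space) identically_distributed_moments:
  fixes H :: "nat \<Rightarrow> 'a \<Rightarrow> real"
  assumes dens: "\<And>k. distributed M lborel (H k) (\<lambda>x. ennreal (q x))"
    and nonneg: "\<And>k. AE \<omega> in M. H k \<omega> \<ge> 0"
    and int1: "integrable M (H 0)" and int2: "integrable M (\<lambda>\<omega>. (H 0 \<omega>)\<^sup>2)"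
  shows "expectation (H 0) \<ge> 0" "expectation (\<lambda>\<omega>. (H 0 \<omega>)\<^sup>2) \<ge> 0"
    and "(\<integral>\<^sup>+\<omega>. ennreal (H k \<omega>) \<partial>M) = ennreal (expectation (H 0))"
    and "(\<integral>\<^sup>+\<omega>. ennreal ((H k \<omega>)\<^sup>2) \<partial>M) = ennreal (expectation (\<lambda>\<omega>. (H 0 \<omega>)\<^sup>2))"
proof -
  note moments = nn_integral_power_identically_distributed[where H = H and q = q, OF dens nonneg]
  show "(\<integral>\<^sup>+\<omega>. ennreal (H k \<omega>) \<partial>M) = ennreal (expectation (H 0))"
    and "(\<integral>\<^sup>+\<omega>. ennreal ((H k \<omega>)\<^sup>2) \<partial>M) = ennreal (expectation (\<lambda>\<omega>. (H 0 \<omega>)\<^sup>2))"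
    using moments[of 1 k] moments[of 2 k] int1 int2 by simp_all
  show "expectation (H 0) \<ge> 0" "expectation (\<lambda>\<omega>. (H 0 \<omega>)\<^sup>2) \<ge> 0"
    using nonneg[of 0] by (auto intro!: integral_nonneg_AE elim!: eventually_mono)
qed

lemma (in prob_space) AE_nonneg_truncated_density:
  fixes U :: "'a \<Rightarrow> real"
  assumes "distributed M lborel U (\<lambda>t. ennreal (c t * indicator {0..R} t))"
    and [measurable]: "c \<in> borel_measurable borel"
  shows "AE \<omega> in M. U \<omega> \<ge> 0"
proof -
  have "(\<lambda>t. ennreal (c t * indicator {0..R} t)) \<in> borel_measurable borel"
    by measurable
  then have "AE t in density lborel (\<lambda>t. ennreal (c t * indicator {0..R} t)). t \<ge> 0"
    by (subst AE_density) (auto simp: indicator_def)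
  then have "AE t in distr M lborel U. t \<ge> 0"
    by (subst distributed_distr_eq_density[OF assms(1)])
  then show ?thesis by (rule AE_distrD[OF distributed_measurable[OF assms(1)]])
qed

lemma (in prob_space) nn_integral_comp_truncated_density:
  fixes U :: "'a \<Rightarrow> real"
  assumes U: "distributed M lborel U (\<lambda>t. ennreal (lam * p t / L * indicator {0..R} t))"
    and F[measurable]: "F \<in> borel_measurable borel" and F_nonneg: "\<And>t. t \<ge> 0 \<Longrightarrow> F t \<ge> 0"
    and p[measurable]: "p \<in> borel_measurable borel" and p_nonneg: "\<And>t. p t \<ge> 0"
    and lam: "lam \<ge> 0" and L: "L > 0"
  shows "(\<integral>\<^sup>+\<omega>. ennreal (F (U \<omega>)) \<partial>M)
       = ennreal (lam / L) * (\<integral>\<^sup>+t\<in>{0..R}. ennreal (p t) * ennreal (F t) \<partial>lborel)"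
proof -
  have "(\<integral>\<^sup>+\<omega>. ennreal (F (U \<omega>)) \<partial>M)
      = (\<integral>\<^sup>+t. ennreal (lam * p t / L * indicator {0..R} t) * ennreal (F t) \<partial>lborel)"
    using distributed_nn_integral[OF U, of "\<lambda>t. ennreal (F t)"] by simp
  also have "\<dots> = (\<integral>\<^sup>+t. ennreal (lam / L) * (ennreal (p t) * ennreal (F t)
      * indicator {0..R} t) \<partial>lborel)"
    using lam L p_nonneg F_nonneg
    by (intro nn_integral_cong) (auto simp: indicator_def ennreal_mult[symmetric] ac_simps)
  also have "\<dots> = ennreal (lam / L) * (\<integral>\<^sup>+t\<in>{0..R}. ennreal (p t) * ennreal (F t) \<partial>lborel)"
    by (rule nn_integral_cmult) measurable
  finally show ?thesis .
qed

section \<open>Radial intensity, path loss and truncation\<close>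

lemma borel_measurable_dist_point[measurable]:
  "(\<lambda>x. dist x x0) \<in> borel_measurable (borel :: 'a::metric_space measure)"
  by (intro borel_measurable_continuous_onI continuous_intros)

lemma nn_integral_radial:
  fixes \<Lambda> :: "'a::metric_space measure" and p :: "real \<Rightarrow> real"
  assumes sets_\<Lambda>: "sets \<Lambda> = sets borel" and p[measurable]: "p \<in> borel_measurable borel"
    and radial: "\<And>A. A \<in> sets borel \<Longrightarrow> A \<subseteq> {0..} \<Longrightarrow>
        emeasure \<Lambda> ((\<lambda>x. dist x x0) -` A) = ennreal lam * (\<integral>\<^sup>+t\<in>A. ennreal (p t) \<partial>lborel)"
    and F[measurable]: "F \<in> borel_measurable borel"
  shows "(\<integral>\<^sup>+x. F (dist x x0) \<partial>\<Lambda>) = ennreal lam * (\<integral>\<^sup>+t\<in>{0..}. ennreal (p t) * F t \<partial>lborel)"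
proof -
  define d where "d t = ennreal lam * (ennreal (p t) * indicator {0..} t)" for t :: real
  have [measurable]: "d \<in> borel_measurable borel" unfolding d_def by measurable
  have dist_meas: "(\<lambda>x. dist x x0) \<in> measurable \<Lambda> borel"
    by (subst measurable_cong_sets[OF sets_\<Lambda> refl]) measurable
  have "distr \<Lambda> borel (\<lambda>x. dist x x0) = density lborel d"
  proof (rule measure_eqI)
    fix A assume "A \<in> sets (distr \<Lambda> borel (\<lambda>x. dist x x0))"
    then have A[measurable]: "A \<in> sets borel" by simp
    have "(\<lambda>x. dist x x0) -` A \<inter> space \<Lambda> = (\<lambda>x. dist x x0) -` (A \<inter> {0..})"
      using sets_eq_imp_space_eq[OF sets_\<Lambda>] by auto
    then have "emeasure (distr \<Lambda> borel (\<lambda>x. dist x x0)) A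
        = emeasure \<Lambda> ((\<lambda>x. dist x x0) -` (A \<inter> {0..}))"
      by (simp only: emeasure_distr[OF dist_meas A])
    also have "\<dots> = ennreal lam * (\<integral>\<^sup>+t\<in>A \<inter> {0..}. ennreal (p t) \<partial>lborel)"
      by (rule radial) auto
    also have "\<dots> = emeasure (density lborel d) A"
      unfolding d_def by (subst nn_integral_cmult[symmetric])
        (auto simp: emeasure_density intro!: nn_integral_cong split: split_indicator)
    finally show "emeasure (distr \<Lambda> borel (\<lambda>x. dist x x0)) A = emeasure (density lborel d) A" .
  qed simp
  then have "(\<integral>\<^sup>+x. F (dist x x0) \<partial>\<Lambda>) = (\<integral>\<^sup>+t. F t \<partial>density lborel d)"
    using nn_integral_distr[OF dist_meas, of F] by simp
  also have "\<dots> = ennreal lam * (\<integral>\<^sup>+t\<in>{0..}. ennreal (p t) * F t \<partial>lborel)"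
    unfolding d_def
    by (subst nn_integral_density) (auto simp: nn_integral_cmult[symmetric] ac_simps)
  finally show ?thesis .
qed

lemma radial_intensity_locally_finite:
  fixes \<Lambda> :: "'a::metric_space measure"
  assumes radial: "\<And>A. A \<in> sets borel \<Longrightarrow> A \<subseteq> {0..} \<Longrightarrow>
        emeasure \<Lambda> ((\<lambda>x. dist x x0) -` A) = ennreal lam * (\<integral>\<^sup>+t\<in>A. ennreal (p t) \<partial>lborel)"
    and lam: "lam > 0" and balls: "\<And>R. emeasure \<Lambda> (cball x0 R) < \<infinity>"
  shows "(\<integral>\<^sup>+t\<in>{0..R}. ennreal (p t) \<partial>lborel) < \<infinity>"
proof (cases "R \<ge> 0")
  case True
  have "(\<lambda>x. dist x x0) -` {0..R} = cball x0 R" by (auto simp: dist_commute)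
  then have "ennreal lam * (\<integral>\<^sup>+t\<in>{0..R}. ennreal (p t) \<partial>lborel) < \<infinity>"
    using radial[of "{0..R}"] balls[of R] by simp
  then show ?thesis using lam by (auto simp: ennreal_mult_less_top)
qed (simp add: indicator_def)

lemma radial_intensity_infinite:
  fixes \<Lambda> :: "'a::metric_space measure"
  assumes radial: "\<And>A. A \<in> sets borel \<Longrightarrow> A \<subseteq> {0..} \<Longrightarrow>
        emeasure \<Lambda> ((\<lambda>x. dist x x0) -` A) = ennreal lam * (\<integral>\<^sup>+t\<in>A. ennreal (p t) \<partial>lborel)"
    and infinite: "emeasure \<Lambda> UNIV = \<infinity>"
  shows "(\<integral>\<^sup>+t\<in>{0..}. ennreal (p t) \<partial>lborel) = \<infinity>"
proof -
  have "(\<lambda>x. dist x x0) -` {0..} = UNIV" by auto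
  then have "ennreal lam * (\<integral>\<^sup>+t\<in>{0..}. ennreal (p t) \<partial>lborel) = \<infinity>"
    using radial[of "{0..}"] infinite by simp
  then show ?thesis by (simp add: ennreal_mult_eq_top_iff)
qed

lemma decay_product_powr_bound:
  fixes p G :: "real \<Rightarrow> real" and \<alpha> :: real
  assumes p_nonneg: "\<And>t. p t \<ge> 0" and G_nonneg: "\<And>t. t \<ge> 0 \<Longrightarrow> G t \<ge> 0"
    and p_growth: "\<exists>\<epsilon>>0. p \<in> O(\<lambda>t. t powr (\<alpha> - 1 - \<epsilon>))" and G_decay: "G \<in> O(\<lambda>t. t powr (- \<alpha>))"
  obtains R c \<epsilon> where "R \<ge> 1" "c > 0" "\<epsilon> > 0" "\<And>t. t \<ge> R \<Longrightarrow> G t * p t \<le> c * t powr (-1 - \<epsilon>)"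
proof -
  obtain \<epsilon> where \<epsilon>: "\<epsilon> > 0" and "p \<in> O(\<lambda>t. t powr (\<alpha> - 1 - \<epsilon>))" using p_growth by blast
  then obtain c1 where c1: "c1 > 0"
    and ev1: "eventually (\<lambda>t. norm (p t) \<le> c1 * norm (t powr (\<alpha> - 1 - \<epsilon>))) at_top"
    by (elim landau_o.bigE)
  obtain c2 where c2: "c2 > 0"
    and ev2: "eventually (\<lambda>t. norm (G t) \<le> c2 * norm (t powr (- \<alpha>))) at_top"
    using G_decay by (elim landau_o.bigE)
  from eventually_conj[OF ev1 ev2] obtain R0 where R0: "\<And>t. t \<ge> R0 \<Longrightarrow>
      norm (p t) \<le> c1 * norm (t powr (\<alpha> - 1 - \<epsilon>)) \<and> norm (G t) \<le> c2 * norm (t powr (- \<alpha>))"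
    unfolding eventually_at_top_linorder by blast
  have "G t * p t \<le> c1 * c2 * t powr (-1 - \<epsilon>)" if t: "t \<ge> max R0 1" for t
  proof -
    have t0: "t > 0" using t by simp
    with R0[of t] t p_nonneg[of t] G_nonneg[of t]
    have "p t \<le> c1 * t powr (\<alpha> - 1 - \<epsilon>)" "G t \<le> c2 * t powr (- \<alpha>)" by auto
    then have "G t * p t \<le> (c2 * t powr (- \<alpha>)) * (c1 * t powr (\<alpha> - 1 - \<epsilon>))"
      using p_nonneg[of t] G_nonneg[of t] t0 by (intro mult_mono) auto
    also have "\<dots> = c1 * c2 * t powr (-1 - \<epsilon>)" using t0 by (simp add: powr_add[symmetric])
    finally show ?thesis .
  qed
  with c1 c2 \<epsilon> show ?thesis by (intro that[of "max R0 1" "c1 * c2" \<epsilon>]) auto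
qed

lemma nn_integral_path_loss_finite:
  fixes p G :: "real \<Rightarrow> real" and \<alpha> :: real
  assumes [measurable]: "p \<in> borel_measurable borel" "G \<in> borel_measurable borel"
    and p_nonneg: "\<And>t. p t \<ge> 0" and G_nonneg: "\<And>t. t \<ge> 0 \<Longrightarrow> G t \<ge> 0"
    and G_mono: "\<And>t. t \<ge> 0 \<Longrightarrow> G t \<le> G 0"
    and p_growth: "\<exists>\<epsilon>>0. p \<in> O(\<lambda>t. t powr (\<alpha> - 1 - \<epsilon>))" and G_decay: "G \<in> O(\<lambda>t. t powr (- \<alpha>))"
    and p_loc: "\<And>R. (\<integral>\<^sup>+t\<in>{0..R}. ennreal (p t) \<partial>lborel) < \<infinity>"
  shows "(\<integral>\<^sup>+t\<in>{0..}. ennreal (p t) * ennreal (G t) \<partial>lborel) < \<infinity>"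
proof -
  obtain R c \<epsilon> where R: "R \<ge> 1" and c: "c > 0" and \<epsilon>: "\<epsilon> > 0"
    and tail: "\<And>t. t \<ge> R \<Longrightarrow> G t * p t \<le> c * t powr (-1 - \<epsilon>)"
    using decay_product_powr_bound[OF p_nonneg G_nonneg p_growth G_decay] by blast
  have "(\<integral>\<^sup>+t\<in>{0..}. ennreal (p t) * ennreal (G t) \<partial>lborel)
      \<le> (\<integral>\<^sup>+t. ennreal (G 0) * (ennreal (p t) * indicator {0..R} t)
                 + ennreal (c * t powr (-1 - \<epsilon>)) * indicator {R..} t \<partial>lborel)"
  proof (rule nn_integral_mono)
    fix t
    have p_G: "ennreal (p t) * ennreal (G t) = ennreal (G t * p t)" if "t \<ge> 0"
      using that p_nonneg[of t] G_nonneg[of t] by (simp add: ennreal_mult[symmetric] mult.commute)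
    consider "t < 0" | "0 \<le> t" "t \<le> R" | "R < t" by linarith
    then show "ennreal (p t) * ennreal (G t) * indicator {0..} t
        \<le> ennreal (G 0) * (ennreal (p t) * indicator {0..R} t)
            + ennreal (c * t powr (-1 - \<epsilon>)) * indicator {R..} t"
    proof cases
      case 2
      then have "ennreal (G t * p t) \<le> ennreal (G 0) * ennreal (p t)"
        using G_mono[of t] p_nonneg[of t] G_nonneg[of 0]
        by (simp add: ennreal_mult[symmetric] ennreal_leI mult_right_mono)
      with 2 p_G show ?thesis by (simp add: add_increasing2)
    next
      case 3
      with R tail[of t] p_G show ?thesis by (simp add: ennreal_leI add_increasing)
    qed simp
  qed
  also have "\<dots> = ennreal (G 0) * (\<integral>\<^sup>+t\<in>{0..R}. ennreal (p t) \<partial>lborel)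
      + (\<integral>\<^sup>+t. ennreal (c * t powr (-1 - \<epsilon>)) * indicator {R..} t \<partial>lborel)"
    by (subst nn_integral_add) (auto simp: nn_integral_cmult)
  also have "(\<integral>\<^sup>+t. ennreal (c * t powr (-1 - \<epsilon>)) * indicator {R..} t \<partial>lborel)
      = ennreal (c * (- (R powr (-1 - \<epsilon> + 1)) / (-1 - \<epsilon> + 1)))"
    using has_integral_powr_to_inf[of "-1 - \<epsilon>" R] \<epsilon> c R
    by (intro nn_integral_has_integral_lebesgue' has_integral_mult_right) auto
  also have "ennreal (G 0) * (\<integral>\<^sup>+t\<in>{0..R}. ennreal (p t) \<partial>lborel)
      + ennreal (c * (- (R powr (-1 - \<epsilon> + 1)) / (-1 - \<epsilon> + 1))) < \<infinity>"
    using p_loc[of R] by (simp add: ennreal_mult_less_top)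
  finally show ?thesis .
qed

lemma nn_integral_path_loss_square_finite:
  fixes p G :: "real \<Rightarrow> real"
  assumes [measurable]: "p \<in> borel_measurable borel" "G \<in> borel_measurable borel"
    and G_nonneg: "\<And>t. t \<ge> 0 \<Longrightarrow> G t \<ge> 0" and G_mono: "\<And>t. t \<ge> 0 \<Longrightarrow> G t \<le> G 0"
    and fin: "(\<integral>\<^sup>+t\<in>{0..}. ennreal (p t) * ennreal (G t) \<partial>lborel) < \<infinity>"
  shows "(\<integral>\<^sup>+t\<in>{0..}. ennreal (p t) * ennreal ((G t)\<^sup>2) \<partial>lborel) < \<infinity>"
proof -
  have "ennreal ((G t)\<^sup>2) \<le> ennreal (G 0) * ennreal (G t)" if "t \<ge> 0" for t
    using G_nonneg[OF that] G_mono[OF that]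
    by (simp add: power2_eq_square ennreal_mult[symmetric] mult_right_mono ennreal_leI)
  then have "ennreal (p t) * ennreal ((G t)\<^sup>2) * indicator {0..} t
      \<le> ennreal (G 0) * (ennreal (p t) * ennreal (G t) * indicator {0..} t)" for t
    by (cases "t \<ge> 0") (auto simp: mult.left_commute[of "ennreal (G 0)"] intro: mult_left_mono)
  then have "(\<integral>\<^sup>+t\<in>{0..}. ennreal (p t) * ennreal ((G t)\<^sup>2) \<partial>lborel)
      \<le> ennreal (G 0) * (\<integral>\<^sup>+t\<in>{0..}. ennreal (p t) * ennreal (G t) \<partial>lborel)"
    by (subst nn_integral_cmult[symmetric]) (auto intro: nn_integral_mono)
  also have "\<dots> < \<infinity>" using fin by (simp add: ennreal_mult_less_top)
  finally show ?thesis .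
qed

lemma nn_integral_path_loss_moments_finite:
  fixes p G :: "real \<Rightarrow> real" and \<alpha> :: real
  assumes [measurable]: "p \<in> borel_measurable borel" "G \<in> borel_measurable borel"
    and p_nonneg: "\<And>t. p t \<ge> 0" and G_nonneg: "\<And>t. t \<ge> 0 \<Longrightarrow> G t \<ge> 0"
    and G_mono: "\<And>s t. 0 \<le> s \<Longrightarrow> s \<le> t \<Longrightarrow> G t \<le> G s"
    and p_growth: "\<exists>\<epsilon>>0. p \<in> O(\<lambda>t. t powr (\<alpha> - 1 - \<epsilon>))" and G_decay: "G \<in> O(\<lambda>t. t powr (- \<alpha>))"
    and p_loc: "\<And>R. (\<integral>\<^sup>+t\<in>{0..R}. ennreal (p t) \<partial>lborel) < \<infinity>"
  shows "(\<integral>\<^sup>+t\<in>{0..}. ennreal (p t) * ennreal (G t) \<partial>lborel) < \<infinity>"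
    and "(\<integral>\<^sup>+t\<in>{0..}. ennreal (p t) * ennreal ((G t)\<^sup>2) \<partial>lborel) < \<infinity>"
proof -
  have G_le: "G t \<le> G 0" if "t \<ge> 0" for t using G_mono[of 0 t] that by simp
  show fin: "(\<integral>\<^sup>+t\<in>{0..}. ennreal (p t) * ennreal (G t) \<partial>lborel) < \<infinity>"
    using assms(1,2) p_nonneg G_nonneg G_le p_growth G_decay p_loc
    by (rule nn_integral_path_loss_finite)
  show "(\<integral>\<^sup>+t\<in>{0..}. ennreal (p t) * ennreal ((G t)\<^sup>2) \<partial>lborel) < \<infinity>"
    using assms(1,2) G_nonneg G_le fin by (rule nn_integral_path_loss_square_finite)
qed

lemma tendsto_nn_integral_atLeastAtMost:
  fixes h :: "real \<Rightarrow> ennreal"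
  assumes [measurable]: "h \<in> borel_measurable borel"
  shows "incseq (\<lambda>n. \<integral>\<^sup>+t\<in>{0..real n}. h t \<partial>lborel)"
    and "(\<lambda>n. \<integral>\<^sup>+t\<in>{0..real n}. h t \<partial>lborel) \<longlonglongrightarrow> (\<integral>\<^sup>+t\<in>{0..}. h t \<partial>lborel)"
proof -
  have inc: "incseq (\<lambda>n t. h t * indicator {0..real n} t)"
    by (auto simp: incseq_def le_fun_def indicator_def intro!: mult_left_mono)
  then show inc_int: "incseq (\<lambda>n. \<integral>\<^sup>+t\<in>{0..real n}. h t \<partial>lborel)"
    by (auto simp: incseq_def le_fun_def intro!: nn_integral_mono)
  have "(SUP n. h t * indicator {0..real n} t) = h t * indicator {0..} t" for t
  proof (rule antisym)
    show "(SUP n. h t * indicator {0..real n} t) \<le> h t * indicator {0..} t"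
      by (rule SUP_least) (auto simp: indicator_def)
    obtain n0 :: nat where "t \<le> real n0" using real_arch_simple by blast
    then have "h t * indicator {0..} t = h t * indicator {0..real n0} t"
      by (simp add: indicator_def)
    also have "\<dots> \<le> (SUP n. h t * indicator {0..real n} t)" by (rule SUP_upper) simp
    finally show "h t * indicator {0..} t \<le> (SUP n. h t * indicator {0..real n} t)" .
  qed
  then show "(\<lambda>n. \<integral>\<^sup>+t\<in>{0..real n}. h t \<partial>lborel) \<longlonglongrightarrow> (\<integral>\<^sup>+t\<in>{0..}. h t \<partial>lborel)"
    using LIMSEQ_SUP[OF inc_int] nn_integral_monotone_convergence_SUP[OF inc] by simp
qed

lemma filterlim_enn2real_at_top:
  fixes f :: "nat \<Rightarrow> ennreal"
  assumes inc: "incseq f" and fin: "\<And>n. f n < \<infinity>" and unbounded: "(SUP n. f n) = \<infinity>"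
  shows "filterlim (\<lambda>n. enn2real (f n)) at_top sequentially"
  unfolding filterlim_at_top eventually_sequentially
proof (intro allI)
  fix Z :: real
  have "ennreal Z < (SUP n. f n)" unfolding unbounded by simp
  then obtain n0 where n0: "ennreal Z < f n0" unfolding less_SUP_iff by blast
  have "Z \<le> enn2real (f n)" if "n0 \<le> n" for n
  proof (cases "Z \<ge> 0")
    case True
    have "ennreal Z < f n" using n0 inc that by (auto simp: incseq_def intro: less_le_trans)
    then have "enn2real (ennreal Z) \<le> enn2real (f n)" using fin[of n] by (intro enn2real_mono) auto
    with True show ?thesis by simp
  qed (use enn2real_nonneg[of "f n"] in linarith)
  then show "\<exists>N. \<forall>n\<ge>N. Z \<le> enn2real (f n)" by blast
qed

lemma filterlim_truncated_mass_at_top: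
  fixes p :: "real \<Rightarrow> real"
  assumes p[measurable]: "p \<in> borel_measurable borel" and p_nonneg: "\<And>t. p t \<ge> 0"
    and p_loc: "\<And>R. (\<integral>\<^sup>+t\<in>{0..R}. ennreal (p t) \<partial>lborel) < \<infinity>"
    and p_inf: "(\<integral>\<^sup>+t\<in>{0..}. ennreal (p t) \<partial>lborel) = \<infinity>" and lam: "lam > 0"
  shows "filterlim (\<lambda>n. lam * (LINT t:{0..real n}|lborel. p t)) at_top sequentially"
proof -
  have "(LINT t:{0..real n}|lborel. p t) = enn2real (\<integral>\<^sup>+t\<in>{0..real n}. ennreal (p t) \<partial>lborel)" for n
    unfolding set_lebesgue_integral_def
    by (subst integral_eq_nn_integral)
       (auto simp: p_nonneg intro!: arg_cong[where f = enn2real] nn_integral_cong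
                                          split: split_indicator)
  moreover note T = tendsto_nn_integral_atLeastAtMost[of "\<lambda>t. ennreal (p t)"]
  have "filterlim (\<lambda>n. enn2real (\<integral>\<^sup>+t\<in>{0..real n}. ennreal (p t) \<partial>lborel)) at_top sequentially"
    using T p_loc p_inf LIMSEQ_unique[OF T(2) LIMSEQ_SUP[OF T(1)]]
    by (intro filterlim_enn2real_at_top) auto
  ultimately show ?thesis
    using lam by (auto intro!: filterlim_tendsto_pos_mult_at_top[OF tendsto_const])
qed

lemma tendsto_enn2real_truncated:
  fixes h :: "real \<Rightarrow> ennreal"
  assumes "h \<in> borel_measurable borel" and "(\<integral>\<^sup>+t\<in>{0..}. h t \<partial>lborel) < \<infinity>"
  shows "(\<lambda>n. enn2real (\<integral>\<^sup>+t\<in>{0..real n}. h t \<partial>lborel)) \<longlonglongrightarrow> enn2real (\<integral>\<^sup>+t\<in>{0..}. h t \<partial>lborel)"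
proof -
  have "(\<lambda>n. \<integral>\<^sup>+t\<in>{0..real n}. h t \<partial>lborel) \<longlonglongrightarrow> ennreal (enn2real (\<integral>\<^sup>+t\<in>{0..}. h t \<partial>lborel))"
    using tendsto_nn_integral_atLeastAtMost(2)[OF assms(1)] assms(2) by simp
  then show ?thesis by (rule tendsto_enn2real) simp
qed

lemma ceiling_div_tendsto_one:
  fixes L :: "nat \<Rightarrow> real"
  assumes L: "filterlim L at_top sequentially"
  shows "(\<lambda>n. real (nat \<lceil>L n\<rceil>) / L n) \<longlonglongrightarrow> 1"
proof (rule tendsto_sandwich[where f = "\<lambda>_. 1" and h = "\<lambda>n. 1 + inverse (L n)"])
  have ev: "eventually (\<lambda>n. L n \<ge> 1) sequentially"
    using L by (simp add: filterlim_at_top)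
  have bounds: "L n \<le> real (nat \<lceil>L n\<rceil>)" "real (nat \<lceil>L n\<rceil>) \<le> L n + 1" if "L n \<ge> 1" for n
    using that by linarith+
  show "eventually (\<lambda>n. 1 \<le> real (nat \<lceil>L n\<rceil>) / L n) sequentially"
    using ev by eventually_elim (use bounds in \<open>simp add: field_simps\<close>)
  show "eventually (\<lambda>n. real (nat \<lceil>L n\<rceil>) / L n \<le> 1 + inverse (L n)) sequentially"
    using ev by eventually_elim (use bounds in \<open>simp add: field_simps\<close>)
  show "(\<lambda>n. 1 + inverse (L n)) \<longlonglongrightarrow> 1"
    using tendsto_add[OF tendsto_const tendsto_inverse_0_at_top[OF L]] by simp
qed simp

lemma truncated_moments_tendsto:
  fixes L a b e v :: "nat \<Rightarrow> real"
  assumes L: "filterlim L at_top sequentially" and a: "a \<longlonglongrightarrow> a0" and b: "b \<longlonglongrightarrow> b0"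
    and e: "\<And>n. L n > 0 \<Longrightarrow> e n = P * real (nat \<lceil>L n\<rceil>) * \<mu>1 * (lam / L n * a n)"
    and v: "\<And>n. L n > 0 \<Longrightarrow>
      v n = P\<^sup>2 * real (nat \<lceil>L n\<rceil>) * (\<mu>2 * (lam / L n * b n) - (\<mu>1 * (lam / L n * a n))\<^sup>2)"
  shows "e \<longlonglongrightarrow> P * \<mu>1 * (lam * a0)" and "v \<longlonglongrightarrow> P\<^sup>2 * \<mu>2 * (lam * b0)"
proof -
  let ?r = "\<lambda>n. real (nat \<lceil>L n\<rceil>) / L n"
  note r = ceiling_div_tendsto_one[OF L] and inv = tendsto_inverse_0_at_top[OF L]
  have ev: "eventually (\<lambda>n. L n > 0) sequentially"
    using L by (simp add: filterlim_at_top_dense)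
  have "(\<lambda>n. P * \<mu>1 * lam * (?r n * a n)) \<longlonglongrightarrow> P * \<mu>1 * lam * (1 * a0)"
    by (intro tendsto_intros r a)
  moreover have "eventually (\<lambda>n. P * \<mu>1 * lam * (?r n * a n) = e n) sequentially"
    using ev by eventually_elim (simp add: e field_simps)
  ultimately show "e \<longlonglongrightarrow> P * \<mu>1 * (lam * a0)"
    by (auto intro: Lim_transform_eventually simp: ac_simps)
  have "(\<lambda>n. P\<^sup>2 * lam * (?r n * (\<mu>2 * b n - \<mu>1\<^sup>2 * lam * (a n)\<^sup>2 * inverse (L n))))
      \<longlonglongrightarrow> P\<^sup>2 * lam * (1 * (\<mu>2 * b0 - \<mu>1\<^sup>2 * lam * a0\<^sup>2 * 0))"
    by (intro tendsto_intros r a b inv)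
  moreover have "eventually
      (\<lambda>n. P\<^sup>2 * lam * (?r n * (\<mu>2 * b n - \<mu>1\<^sup>2 * lam * (a n)\<^sup>2 * inverse (L n))) = v n)
      sequentially"
    using ev by eventually_elim (simp add: v field_simps power2_eq_square)
  ultimately show "v \<longlonglongrightarrow> P\<^sup>2 * \<mu>2 * (lam * b0)"
    by (auto intro: Lim_transform_eventually simp: ac_simps)
qed

lemma poisson_interference_mean_variance:
  fixes X :: "nat \<Rightarrow> 'w \<Rightarrow> 'a::metric_space" and H :: "nat \<Rightarrow> 'w \<Rightarrow> real" and G p :: "real \<Rightarrow> real"
  assumes "marked_poisson_process M \<Lambda> X H"
    and balls: "\<And>R. emeasure \<Lambda> (cball x0 R) < \<infinity>"
    and radial: "\<And>A. A \<in> sets borel \<Longrightarrow> A \<subseteq> {0..} \<Longrightarrow>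
        emeasure \<Lambda> ((\<lambda>x. dist x x0) -` A) = ennreal lam * (\<integral>\<^sup>+t\<in>A. ennreal (p t) \<partial>lborel)"
    and p[measurable]: "p \<in> borel_measurable borel"
    and G[measurable]: "G \<in> borel_measurable borel" and G_nonneg: "\<And>t. t \<ge> 0 \<Longrightarrow> G t \<ge> 0"
    and J1: "(\<integral>\<^sup>+t\<in>{0..}. ennreal (p t) * ennreal (G t) \<partial>lborel) < \<infinity>"
    and J2: "(\<integral>\<^sup>+t\<in>{0..}. ennreal (p t) * ennreal ((G t)\<^sup>2) \<partial>lborel) < \<infinity>"
    and H_nonneg: "\<And>k. AE \<omega> in M. H k \<omega> \<ge> 0"
    and H1: "\<And>k. (\<integral>\<^sup>+\<omega>. ennreal (H k \<omega>) \<partial>M) = ennreal \<mu>1"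
    and H2: "\<And>k. (\<integral>\<^sup>+\<omega>. ennreal ((H k \<omega>)\<^sup>2) \<partial>M) = ennreal \<mu>2"
    and nonneg: "P \<ge> 0" "lam \<ge> 0" "\<mu>1 \<ge> 0" "\<mu>2 \<ge> 0"
  defines "I \<equiv> \<lambda>\<omega>. enn2real (\<Sum>k. ennreal (P * H k \<omega> * G (dist (X k \<omega>) x0)))"
    and "j1 \<equiv> enn2real (\<integral>\<^sup>+t\<in>{0..}. ennreal (p t) * ennreal (G t) \<partial>lborel)"
    and "j2 \<equiv> enn2real (\<integral>\<^sup>+t\<in>{0..}. ennreal (p t) * ennreal ((G t)\<^sup>2) \<partial>lborel)"
  shows "integral\<^sup>L M I = P * \<mu>1 * (lam * j1)"
    and "integral\<^sup>L M (\<lambda>\<omega>. (I \<omega> - integral\<^sup>L M I)\<^sup>2) = P\<^sup>2 * \<mu>2 * (lam * j2)"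
proof -
  interpret marked_poisson_process M \<Lambda> X H by fact
  have K: "finite_exhaustion \<Lambda> (\<lambda>r. cball x0 (real r))"
    unfolding finite_exhaustion_def
  proof (intro conjI allI)
    show "incseq (\<lambda>r. cball x0 (real r))" by (auto simp: incseq_def subset_cball)
    have "x \<in> cball x0 (real (nat \<lceil>dist x0 x\<rceil>))" for x by simp
    then show "(\<Union>r. cball x0 (real r)) = UNIV" by blast
  qed (use balls in auto)
  have radial_integral: "(\<integral>\<^sup>+x. ennreal (F (dist x x0)) \<partial>\<Lambda>)
      = ennreal lam * (\<integral>\<^sup>+t\<in>{0..}. ennreal (p t) * ennreal (F t) \<partial>lborel)"
    if "F \<in> borel_measurable borel" for F
    using nn_integral_radial[OF sets_mean_measure p radial, of "\<lambda>t. ennreal (F t)"] that by simp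
  have "(\<lambda>t. (G t)\<^sup>2) \<in> borel_measurable borel" by measurable
  then have "(\<integral>\<^sup>+x. ennreal (G (dist x x0)) \<partial>\<Lambda>) = ennreal (lam * j1)"
    and "(\<integral>\<^sup>+x. ennreal ((G (dist x x0))\<^sup>2) \<partial>\<Lambda>) = ennreal (lam * j2)"
    using radial_integral[OF G] radial_integral[of "\<lambda>t. (G t)\<^sup>2"] J1 J2 nonneg
    by (simp_all add: ennreal_mult j1_def j2_def)
  moreover have "(\<lambda>x. G (dist x x0)) \<in> borel_measurable borel" by measurable
  moreover have "G (dist x x0) \<ge> 0" for x by (simp add: G_nonneg)
  ultimately have "integral\<^sup>L M I = P * \<mu>1 * (lam * j1)
      \<and> integral\<^sup>L M (\<lambda>\<omega>. (I \<omega> - integral\<^sup>L M I)\<^sup>2) = P\<^sup>2 * \<mu>2 * (lam * j2)"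
    using shot_noise_mean_variance[OF K, of "\<lambda>x. G (dist x x0)" "lam * j1" "lam * j2" \<mu>1 \<mu>2 P]
      H_nonneg H1 H2 nonneg unfolding I_def j1_def j2_def by simp
  then show "integral\<^sup>L M I = P * \<mu>1 * (lam * j1)"
    and "integral\<^sup>L M (\<lambda>\<omega>. (I \<omega> - integral\<^sup>L M I)\<^sup>2) = P\<^sup>2 * \<mu>2 * (lam * j2)"
    by blast+
qed

lemma (in prob_space) truncated_interference_mean_variance:
  fixes H U :: "nat \<Rightarrow> 'a \<Rightarrow> real" and G p :: "real \<Rightarrow> real"
  assumes S: "finite S" and L: "L > 0"
    and p[measurable]: "p \<in> borel_measurable borel" and p_nonneg: "\<And>t. p t \<ge> 0"
    and G[measurable]: "G \<in> borel_measurable borel" and G_nonneg: "\<And>t. t \<ge> 0 \<Longrightarrow> G t \<ge> 0"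
    and U_dens: "\<And>k. k \<in> S \<Longrightarrow>
      distributed M lborel (U k) (\<lambda>t. ennreal (lam * p t / L * indicator {0..R} t))"
    and indep_U: "indep_vars (\<lambda>_. borel) U S"
    and indep_UH: "indep_rvs M (PiM S (\<lambda>_. borel)) (\<lambda>\<omega>. \<lambda>k\<in>S. U k \<omega>)
                              (PiM UNIV (\<lambda>_. borel)) (\<lambda>\<omega> k. H k \<omega>)"
    and indep_H: "indep_vars (\<lambda>_. borel) H UNIV" and H_nonneg: "\<And>k. AE \<omega> in M. H k \<omega> \<ge> 0"
    and H1: "\<And>k. (\<integral>\<^sup>+\<omega>. ennreal (H k \<omega>) \<partial>M) = ennreal \<mu>1"
    and H2: "\<And>k. (\<integral>\<^sup>+\<omega>. ennreal ((H k \<omega>)\<^sup>2) \<partial>M) = ennreal \<mu>2"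
    and J1: "(\<integral>\<^sup>+t\<in>{0..R}. ennreal (p t) * ennreal (G t) \<partial>lborel) < \<infinity>"
    and J2: "(\<integral>\<^sup>+t\<in>{0..R}. ennreal (p t) * ennreal ((G t)\<^sup>2) \<partial>lborel) < \<infinity>"
    and nonneg: "P \<ge> 0" "lam \<ge> 0" "\<mu>1 \<ge> 0" "\<mu>2 \<ge> 0"
  defines "Y \<equiv> \<lambda>\<omega>. \<Sum>k\<in>S. P * H k \<omega> * G (U k \<omega>)"
    and "a \<equiv> enn2real (\<integral>\<^sup>+t\<in>{0..R}. ennreal (p t) * ennreal (G t) \<partial>lborel)"
    and "b \<equiv> enn2real (\<integral>\<^sup>+t\<in>{0..R}. ennreal (p t) * ennreal ((G t)\<^sup>2) \<partial>lborel)"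
  shows "expectation Y = P * card S * \<mu>1 * (lam / L * a)"
    and "expectation (\<lambda>\<omega>. (Y \<omega> - expectation Y)\<^sup>2)
       = P\<^sup>2 * card S * (\<mu>2 * (lam / L * b) - (\<mu>1 * (lam / L * a))\<^sup>2)"
proof -
  have GU_nonneg: "AE \<omega> in M. \<forall>k\<in>S. G (U k \<omega>) \<ge> 0"
  proof (rule AE_finite_allI[OF S])
    fix k assume "k \<in> S"
    have "AE \<omega> in M. U k \<omega> \<ge> 0"
      by (rule AE_nonneg_truncated_density[OF U_dens[OF \<open>k \<in> S\<close>]]) measurable
    then show "AE \<omega> in M. G (U k \<omega>) \<ge> 0" by eventually_elim (rule G_nonneg)
  qed
  have GU: "(\<integral>\<^sup>+\<omega>. ennreal (F (U k \<omega>)) \<partial>M) = ennreal (lam / L * c)"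
    if "k \<in> S" "F \<in> borel_measurable borel" "\<And>t. t \<ge> 0 \<Longrightarrow> F t \<ge> 0"
      and "(\<integral>\<^sup>+t\<in>{0..R}. ennreal (p t) * ennreal (F t) \<partial>lborel) = ennreal c" for k F c
  proof -
    have "ennreal (lam / L * c) = ennreal (lam / L) * ennreal c"
      using nonneg L by (intro ennreal_mult') simp
    then show ?thesis
      using nn_integral_comp_truncated_density[OF U_dens[OF that(1)] that(2,3) p p_nonneg]
          that(4) nonneg L
      by (simp only:)
  qed
  have "(\<lambda>t. (G t)\<^sup>2) \<in> borel_measurable borel" by measurable
  then have "(\<integral>\<^sup>+\<omega>. ennreal (G (U k \<omega>)) \<partial>M) = ennreal (lam / L * a)"
    and "(\<integral>\<^sup>+\<omega>. ennreal ((G (U k \<omega>))\<^sup>2) \<partial>M) = ennreal (lam / L * b)" if "k \<in> S" for k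
    using GU[OF that G G_nonneg, of a] GU[OF that, of "\<lambda>t. (G t)\<^sup>2" b] G_nonneg J1 J2
    by (simp_all add: a_def b_def)
  then interpret independent_marked_sample M S H U G \<mu>1 \<mu>2 "lam / L * a" "lam / L * b"
    using S indep_H H_nonneg H1 H2 indep_U indep_UH G GU_nonneg nonneg L
    by unfold_locales (simp_all add: a_def b_def)
  show "expectation Y = P * card S * \<mu>1 * (lam / L * a)"
    and "expectation (\<lambda>\<omega>. (Y \<omega> - expectation Y)\<^sup>2)
       = P\<^sup>2 * card S * (\<mu>2 * (lam / L * b) - (\<mu>1 * (lam / L * a))\<^sup>2)"
    using sum_mean_variance[OF nonneg(1)] unfolding Y_def by simp_all
qed

lemma (in prob_space) truncated_interference_moments_tendsto:
  fixes H :: "nat \<Rightarrow> 'a \<Rightarrow> real" and U :: "nat \<Rightarrow> nat \<Rightarrow> 'a \<Rightarrow> real"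
    and G p :: "real \<Rightarrow> real" and L :: "nat \<Rightarrow> real"
  assumes L: "filterlim L at_top sequentially"
    and p[measurable]: "p \<in> borel_measurable borel" and p_nonneg: "\<And>t. p t \<ge> 0"
    and G[measurable]: "G \<in> borel_measurable borel" and G_nonneg: "\<And>t. t \<ge> 0 \<Longrightarrow> G t \<ge> 0"
    and U_dens: "\<And>n k. k \<in> {1..nat \<lceil>L n\<rceil>} \<Longrightarrow>
      distributed M lborel (U n k) (\<lambda>t. ennreal (lam * p t / L n * indicator {0..real n} t))"
    and indep_U: "\<And>n. indep_vars (\<lambda>_. borel) (U n) {1..nat \<lceil>L n\<rceil>}"
    and indep_UH: "\<And>n. indep_rvs M (PiM {1..nat \<lceil>L n\<rceil>} (\<lambda>_. borel))
      (\<lambda>\<omega>. \<lambda>k\<in>{1..nat \<lceil>L n\<rceil>}. U n k \<omega>) (PiM UNIV (\<lambda>_. borel)) (\<lambda>\<omega> k. H k \<omega>)"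
    and indep_H: "indep_vars (\<lambda>_. borel) H UNIV" and H_nonneg: "\<And>k. AE \<omega> in M. H k \<omega> \<ge> 0"
    and H1: "\<And>k. (\<integral>\<^sup>+\<omega>. ennreal (H k \<omega>) \<partial>M) = ennreal \<mu>1"
    and H2: "\<And>k. (\<integral>\<^sup>+\<omega>. ennreal ((H k \<omega>)\<^sup>2) \<partial>M) = ennreal \<mu>2"
    and J1: "(\<integral>\<^sup>+t\<in>{0..}. ennreal (p t) * ennreal (G t) \<partial>lborel) < \<infinity>"
    and J2: "(\<integral>\<^sup>+t\<in>{0..}. ennreal (p t) * ennreal ((G t)\<^sup>2) \<partial>lborel) < \<infinity>"
    and nonneg: "P \<ge> 0" "lam \<ge> 0" "\<mu>1 \<ge> 0" "\<mu>2 \<ge> 0"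
  defines "I \<equiv> \<lambda>n \<omega>. \<Sum>k\<in>{1..nat \<lceil>L n\<rceil>}. P * H k \<omega> * G (U n k \<omega>)"
  shows "(\<lambda>n. expectation (I n))
      \<longlonglongrightarrow> P * \<mu>1 * (lam * enn2real (\<integral>\<^sup>+t\<in>{0..}. ennreal (p t) * ennreal (G t) \<partial>lborel))"
    and "(\<lambda>n. expectation (\<lambda>\<omega>. (I n \<omega> - expectation (I n))\<^sup>2))
      \<longlonglongrightarrow> P\<^sup>2 * \<mu>2 * (lam * enn2real (\<integral>\<^sup>+t\<in>{0..}. ennreal (p t) * ennreal ((G t)\<^sup>2) \<partial>lborel))"
proof -
  have "(\<integral>\<^sup>+t\<in>{0..real n}. f t \<partial>lborel) \<le> (\<integral>\<^sup>+t\<in>{0..}. f t \<partial>lborel)" for f :: "real \<Rightarrow> ennreal" and n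
    by (intro nn_integral_mono) (auto split: split_indicator)
  note truncated_finite = le_less_trans[OF this J1] le_less_trans[OF this J2]
  define a b where "a n = enn2real (\<integral>\<^sup>+t\<in>{0..real n}. ennreal (p t) * ennreal (G t) \<partial>lborel)"
    and "b n = enn2real (\<integral>\<^sup>+t\<in>{0..real n}. ennreal (p t) * ennreal ((G t)\<^sup>2) \<partial>lborel)" for n
  have e: "expectation (I n) = P * real (nat \<lceil>L n\<rceil>) * \<mu>1 * (lam / L n * a n)"
    and v: "expectation (\<lambda>\<omega>. (I n \<omega> - expectation (I n))\<^sup>2)
      = P\<^sup>2 * real (nat \<lceil>L n\<rceil>) * (\<mu>2 * (lam / L n * b n) - (\<mu>1 * (lam / L n * a n))\<^sup>2)"
    if "L n > 0" for n
    using truncated_interference_mean_variance[OF finite_atLeastAtMost that p p_nonneg G G_nonneg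
        U_dens indep_U indep_UH indep_H H_nonneg H1 H2 truncated_finite nonneg]
    unfolding I_def a_def b_def by simp_all
  have m1: "(\<lambda>t. ennreal (p t) * ennreal (G t)) \<in> borel_measurable borel" by measurable
  have m2: "(\<lambda>t. ennreal (p t) * ennreal ((G t)\<^sup>2)) \<in> borel_measurable borel" by measurable
  note limits = tendsto_enn2real_truncated[OF m1 J1, folded a_def]
    tendsto_enn2real_truncated[OF m2 J2, folded b_def]
  show "(\<lambda>n. expectation (I n))
      \<longlonglongrightarrow> P * \<mu>1 * (lam * enn2real (\<integral>\<^sup>+t\<in>{0..}. ennreal (p t) * ennreal (G t) \<partial>lborel))"
    and "(\<lambda>n. expectation (\<lambda>\<omega>. (I n \<omega> - expectation (I n))\<^sup>2))
      \<longlonglongrightarrow> P\<^sup>2 * \<mu>2 * (lam * enn2real (\<integral>\<^sup>+t\<in>{0..}. ennreal (p t) * ennreal ((G t)\<^sup>2) \<partial>lborel))"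
    using truncated_moments_tendsto[OF L limits e v] by simp_all
qed

theorem lemma3:
  fixes M :: "'w measure"
    and lam \<alpha> P :: real
    and \<Lambda> :: "(real^2) measure"
    and Xo :: "real^2"
    and X :: "nat \<Rightarrow> 'w \<Rightarrow> real^2"
    and p G q :: "real \<Rightarrow> real"
    and H :: "nat \<Rightarrow> 'w \<Rightarrow> real"
    and U :: "nat \<Rightarrow> nat \<Rightarrow> 'w \<Rightarrow> real"
    and \<Lambda>n :: "nat \<Rightarrow> real"
    and Ilam :: "'w \<Rightarrow> real"
    and In :: "nat \<Rightarrow> 'w \<Rightarrow> real"
  assumes M: "prob_space M"
    and lam_pos: "lam > 0" and alpha: "\<alpha> > 2" and P_pos: "P > 0"
    and PPP: "poisson_point_process M \<Lambda> X"
    and loc_fin: "\<And>K. compact K \<Longrightarrow> emeasure \<Lambda> K < \<infinity>"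
    and Lambda_inf: "emeasure \<Lambda> UNIV = \<infinity>"
    and p_meas: "p \<in> borel_measurable borel"
    and p_nonneg: "\<And>t. p t \<ge> 0"
    and p_growth: "\<exists>\<epsilon>>0. p \<in> O(\<lambda>t. t powr (\<alpha> - 1 - \<epsilon>))"
    and radial: "\<And>A. A \<in> sets borel \<Longrightarrow> A \<subseteq> {0..} \<Longrightarrow>
        emeasure \<Lambda> ((\<lambda>x. dist x Xo) -` A) = ennreal lam * (\<integral>\<^sup>+ t\<in>A. ennreal (p t) \<partial>lborel)"
    and G_meas: "G \<in> borel_measurable borel"
    and G_nonneg: "\<And>t. t \<ge> 0 \<Longrightarrow> G t \<ge> 0"
    and G_bdd: "bdd_above (G ` {0..})"
    and G_mono: "\<And>s t. 0 \<le> s \<Longrightarrow> s \<le> t \<Longrightarrow> G t \<le> G s"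
    and G_decay: "G \<in> O(\<lambda>t. t powr (- \<alpha>))"
    and H_nonneg: "\<And>k. AE \<omega> in M. H k \<omega> \<ge> 0"
    and H_dens: "\<And>k. distributed M lborel (H k) (\<lambda>x. ennreal (q x))"
    and H_indep: "prob_space.indep_vars M (\<lambda>_. borel) H UNIV"
    and H_mom: "\<And>k j. j \<in> {1, 2, 3} \<Longrightarrow> integrable M (\<lambda>\<omega>. (H k \<omega>) ^ j)"
    and H_X_indep: "indep_rvs M
        (PiM UNIV (\<lambda>_. borel)) (\<lambda>\<omega> k. X k \<omega>) (PiM UNIV (\<lambda>_. borel)) (\<lambda>\<omega> k. H k \<omega>)"
    and Ilam_def: "\<And>\<omega>. Ilam \<omega> = enn2real (\<Sum>k. ennreal (P * H k \<omega> * G (dist (X k \<omega>) Xo)))"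
    and \<Lambda>n_def: "\<And>n. \<Lambda>n n = lam * (LINT t:{0..real n}|lborel. p t)"
    and U_dens: "\<And>n k. k \<in> {1..nat \<lceil>\<Lambda>n n\<rceil>} \<Longrightarrow>
        distributed M lborel (U n k)
          (\<lambda>t. ennreal (lam * p t / \<Lambda>n n * indicator {0..real n} t))"
    and U_indep: "\<And>n. prob_space.indep_vars M (\<lambda>_. borel) (U n) {1..nat \<lceil>\<Lambda>n n\<rceil>}"
    and U_H_indep: "\<And>n. indep_rvs M
        (PiM {1..nat \<lceil>\<Lambda>n n\<rceil>} (\<lambda>_. borel)) (\<lambda>\<omega>. \<lambda>k\<in>{1..nat \<lceil>\<Lambda>n n\<rceil>}. U n k \<omega>)
        (PiM UNIV (\<lambda>_. borel)) (\<lambda>\<omega> k. H k \<omega>)"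
    and In_def: "\<And>n \<omega>. In n \<omega> = (\<Sum>k\<in>{1..nat \<lceil>\<Lambda>n n\<rceil>}. P * H k \<omega> * G (U n k \<omega>))"
  shows "(\<lambda>n. integral\<^sup>L M (In n)) \<longlonglongrightarrow> integral\<^sup>L M Ilam
     \<and> (\<lambda>n. integral\<^sup>L M (\<lambda>\<omega>. (In n \<omega> - integral\<^sup>L M (In n))\<^sup>2))
         \<longlonglongrightarrow> integral\<^sup>L M (\<lambda>\<omega>. (Ilam \<omega> - integral\<^sup>L M Ilam)\<^sup>2)"
proof -
  interpret prob_space M by (rule M)
  note [measurable] = p_meas G_meas
  have marked: "marked_poisson_process M \<Lambda> X H"
    using M PPP H_indep H_X_indep by unfold_locales
  have balls: "emeasure \<Lambda> (cball Xo R) < \<infinity>" for R by (rule loc_fin) simp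
  note p_loc = radial_intensity_locally_finite[OF radial lam_pos balls]
  have J: "(\<integral>\<^sup>+t\<in>{0..}. ennreal (p t) * ennreal (G t) \<partial>lborel) < \<infinity>"
    "(\<integral>\<^sup>+t\<in>{0..}. ennreal (p t) * ennreal ((G t)\<^sup>2) \<partial>lborel) < \<infinity>"
    using nn_integral_path_loss_moments_finite[OF p_meas G_meas p_nonneg G_nonneg G_mono p_growth
        G_decay p_loc] by simp_all
  define \<mu>1 \<mu>2 where "\<mu>1 = integral\<^sup>L M (H 0)" and "\<mu>2 = integral\<^sup>L M (\<lambda>\<omega>. (H 0 \<omega>)\<^sup>2)"
  note \<mu> = identically_distributed_moments[where H = H and q = q, OF H_dens H_nonneg
      H_mom[where k = 0 and j = 1, simplified] H_mom[where k = 0 and j = 2, simplified],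
      folded \<mu>1_def \<mu>2_def]
  have P: "P \<ge> 0" and lam: "lam \<ge> 0" using P_pos lam_pos by simp_all
  have Ilam_eq: "Ilam = (\<lambda>\<omega>. enn2real (\<Sum>k. ennreal (P * H k \<omega> * G (dist (X k \<omega>) Xo))))"
    using Ilam_def by auto
  note Poisson = marked balls radial p_meas G_meas G_nonneg J H_nonneg \<mu>(3,4) P lam \<mu>(1,2)
  have In_eq: "In = (\<lambda>n \<omega>. \<Sum>k\<in>{1..nat \<lceil>\<Lambda>n n\<rceil>}. P * H k \<omega> * G (U n k \<omega>))"
    using In_def by auto
  have "filterlim \<Lambda>n at_top sequentially"
    using filterlim_truncated_mass_at_top[OF p_meas p_nonneg p_loc
        radial_intensity_infinite[OF radial Lambda_inf] lam_pos]
    unfolding \<Lambda>n_def[symmetric] .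
  note truncated = this p_meas p_nonneg G_meas G_nonneg U_dens U_indep U_H_indep H_indep H_nonneg
    \<mu>(3,4) J P lam \<mu>(1,2)
  define j1 j2 where "j1 = enn2real (\<integral>\<^sup>+t\<in>{0..}. ennreal (p t) * ennreal (G t) \<partial>lborel)"
    and "j2 = enn2real (\<integral>\<^sup>+t\<in>{0..}. ennreal (p t) * ennreal ((G t)\<^sup>2) \<partial>lborel)"
  have "integral\<^sup>L M Ilam = P * \<mu>1 * (lam * j1)"
    unfolding Ilam_eq j1_def using Poisson by (rule poisson_interference_mean_variance(1))
  moreover have "integral\<^sup>L M (\<lambda>\<omega>. (Ilam \<omega> - integral\<^sup>L M Ilam)\<^sup>2) = P\<^sup>2 * \<mu>2 * (lam * j2)"
    unfolding Ilam_eq j2_def using Poisson by (rule poisson_interference_mean_variance(2))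
  moreover have "(\<lambda>n. integral\<^sup>L M (In n)) \<longlonglongrightarrow> P * \<mu>1 * (lam * j1)"
    unfolding In_eq j1_def using truncated by (rule truncated_interference_moments_tendsto(1))
  moreover have "(\<lambda>n. integral\<^sup>L M (\<lambda>\<omega>. (In n \<omega> - integral\<^sup>L M (In n))\<^sup>2)) \<longlonglongrightarrow> P\<^sup>2 * \<mu>2 * (lam * j2)"
    unfolding In_eq j2_def using truncated by (rule truncated_interference_moments_tendsto(2))
  ultimately show ?thesis by simp
qed

end
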